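(* Let $f=\frac1n\sum_{i=1}^n f_i$, where each $f_i:\mathbb{R}^d\to\mathbb{R}$ is differentiable, bounded below by $f_i^{\inf}\in\mathbb{R}$, and ${\bf L}_i$-matrix smooth with ${\bf L}_i\in\mathbb{S}^d_{++}$. Assume $f\ge f^{\inf}$ on $\mathbb{R}^d$ and $f$ is ${\bf L}$-matrix smooth with ${\bf L}\in\mathbb{S}^d_+$. Let $\{{\bf T}_i^k:i\in[n],k\ge0\}$ be mutually independent random matrices with common distribution $\mathcal T$ on $\mathbb{S}^d_+$ and $\mathbb{E}[{\bf T}_i^k]={\bf I}_d$. Let ${\bf D}\in\mathbb{S}^d_{++}$ satisfy ${\bf D}{\bf L}{\bf D}\preceq{\bf D}$, fix $x^0$, and let $$x^{k+1}=x^k-\frac1n\sum_{i=1}^n{\bf T}_i^k{\bf D}\nabla f_i(x^k).$$ Then for every $K\ge1$, $$\min_{0\le k\le K-1}\mathbb{E}\Big[\|\nabla f(x^k)\|^2_{{\bf D}/\det({\bf D})^{1/d}}\Big]\le\frac{2(1+\frac{\lambda'_{{\bf D}}}{n})^K(f(x^0)-f^{\inf})}{\det({\bf D})^{1/d}K}+\frac{2\lambda'_{{\bf D}}\Delta^{\inf}}{\det({\bf D})^{1/d}n},$$ where $\Delta^{\inf}:=f^{\inf}-\frac1n\sum_if_i^{\inf}$ and $\lambda'_{{\bf D}}:=\max_i\lambda_{\max}\big(\mathbb{E}[{\bf L}_i^{1/2}{\bf D}({\bf T}_i^k-{\bf I}_d){\bf L}({\bf T}_i^k-{\bf I}_d){\bf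 D}{\bf L}_i^{1/2}]\big)$.
   Context: A differentiable $g$ is ${\bf M}$-matrix smooth if $g(x)\le g(y)+\langle\nabla g(y),x-y\rangle+\frac12\langle{\bf M}(x-y),x-y\rangle$ for all $x,y$. $\mathbb{S}^d_{+}$/$\mathbb{S}^d_{++}$: symmetric positive semidefinite/definite matrices; $\preceq$ Loewner order; $\|x\|_{{\bf Q}}^2:=\langle{\bf Q}x,x\rangle$. All expectations assumed finite. *)

theory Defs
  imports "HOL-Probability.Probability"
begin

type_synonym 'd rmat = "real^'d^'d"

definition sym_mat :: "('d::finite) rmat \<Rightarrow> bool" where
  "sym_mat A \<longleftrightarrow> transpose A = A"

definition psd :: "('d::finite) rmat \<Rightarrow> bool" where
  "psd A \<longleftrightarrow> sym_mat A \<and> (\<forall>x::real^'d. 0 \<le> x \<bullet> (A *v x))"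

definition pd :: "('d::finite) rmat \<Rightarrow> bool" where
  "pd A \<longleftrightarrow> sym_mat A \<and> (\<forall>x::real^'d. x \<noteq> 0 \<longrightarrow> 0 < x \<bullet> (A *v x))"

definition loewner_le :: "('d::finite) rmat \<Rightarrow> 'd rmat \<Rightarrow> bool" where
  "loewner_le A B \<longleftrightarrow> psd (B - A)"

definition qnorm2 :: "('d::finite) rmat \<Rightarrow> real^'d \<Rightarrow> real" where
  "qnorm2 Q x = (Q *v x) \<bullet> x"

definition matrix_smooth :: "('d::finite) rmat \<Rightarrow> (real^'d \<Rightarrow> real) \<Rightarrow> (real^'d \<Rightarrow> real^'d) \<Rightarrow> bool" where
  "matrix_smooth M g gg \<longleftrightarrow>
     (\<forall>x y. g x \<le> g y + gg y \<bullet> (x - y) + 1/2 * ((M *v (x - y)) \<bullet> (x - y)))"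

definition msqrt :: "('d::finite) rmat \<Rightarrow> 'd rmat" where
  "msqrt A = (THE S. psd S \<and> S ** S = A)"

definition lambda_max :: "('d::finite) rmat \<Rightarrow> real" where
  "lambda_max A = Max {c. \<exists>v. v \<noteq> 0 \<and> A *v v = c *\<^sub>R v}"

primrec iter :: "nat \<Rightarrow> (nat \<Rightarrow> real^'d \<Rightarrow> real^'d) \<Rightarrow> (nat \<Rightarrow> nat \<Rightarrow> 'a \<Rightarrow> ('d::finite) rmat)
    \<Rightarrow> 'd rmat \<Rightarrow> real^'d \<Rightarrow> nat \<Rightarrow> 'a \<Rightarrow> real^'d" where
  "iter n gf T D x0 0 \<omega> = x0"
| "iter n gf T D x0 (Suc k) \<omega> =
     iter n gf T D x0 k \<omega> - (1 / real n) *\<^sub>R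
       (\<Sum>i<n. T i k \<omega> *v (D *v gf i (iter n gf T D x0 k \<omega>)))"

end

(*
  Matrix smoothness of f along the step G = (1/n) sum_i T_i D grad f_i(x) gives
  f(x - G) <= f(x) - <grad f(x), G> + |G|_L^2 / 2.  Since x^k depends only on the sketches of
  earlier rounds, taking expectations replaces T_i by E[T_i] = I in the linear term, and T_i L T_j
  by L for i <> j and by L + E[(T - I) L (T - I)] for i = j in the quadratic term.  The condition
  D L D <= D bounds the resulting |D grad f|_L^2 by |grad f|_D^2, while each noise term is at most
  lambda'_D times the squared L_i^-1-norm of grad f_i, which smoothness and the lower bound on f_i
  cap at 2 lambda'_D (f_i - f_i^inf).  For delta_k = E f(x^k) - f^inf this yields
  delta_(k+1) <= (1 + lambda'_D / n) delta_k - E |grad f(x^k)|_D^2 / 2 + lambda'_D Delta^inf / n,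
  and unrolling the recursion with geometric weights gives the bound.
*)

theory Submission
  imports Defs
begin

section \<open>Symmetric matrices\<close>

lemma inner_matrix_vector_transpose:
  fixes A :: "real^'n^'m"
  shows "(A *v x) \<bullet> y = x \<bullet> (transpose A *v y)"
  by (metis dot_lmul_matrix inner_commute transpose_matrix_vector)

lemma sym_mat_inner:
  fixes A :: "real^'n^'n"
  assumes "sym_mat A"
  shows "(A *v x) \<bullet> y = x \<bullet> (A *v y)"
  using assms inner_matrix_vector_transpose[of A x y] by (simp add: sym_mat_def)

lemma sym_matI:
  fixes A :: "real^'n^'n"
  assumes "\<And>x y. (A *v x) \<bullet> y = x \<bullet> (A *v y)"
  shows "sym_mat A"
proof -
  have "(transpose A *v x - A *v x) \<bullet> y = 0" for x y
    using assms[of x y] inner_matrix_vector_transpose[of "transpose A" x y]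
    by (simp add: inner_diff_left)
  then have "transpose A *v x = A *v x" for x
    by (metis eq_iff_diff_eq_0 inner_eq_zero_iff)
  then show ?thesis by (simp add: sym_mat_def matrix_eq)
qed

lemma sym_mat_square:
  fixes S :: "real^'n^'n"
  assumes "sym_mat S"
  shows "sym_mat (S ** S)"
  using assms by (simp add: sym_mat_def matrix_transpose_mul)

lemma pd_imp_psd: "pd A \<Longrightarrow> psd A"
  unfolding pd_def psd_def by (metis inner_zero_left order_le_less)

lemma psd_congruence:
  fixes P L :: "real^'n^'n"
  assumes "psd L"
  shows "psd (transpose P ** L ** P)"
proof -
  have "transpose L = L" using assms by (simp add: psd_def sym_mat_def)
  then have "sym_mat (transpose P ** L ** P)"
    by (simp add: sym_mat_def matrix_transpose_mul matrix_mul_assoc)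
  moreover have "x \<bullet> ((transpose P ** L ** P) *v x) = (P *v x) \<bullet> (L *v (P *v x))" for x
    by (metis inner_commute inner_matrix_vector_transpose matrix_vector_mul_assoc)
  ultimately show ?thesis using assms by (simp add: psd_def)
qed

lemma quadratic_form_add_scaled:
  fixes A :: "real^'n^'n"
  assumes "sym_mat A"
  shows "(v + t *\<^sub>R z) \<bullet> (A *v (v + t *\<^sub>R z))
    = v \<bullet> (A *v v) + 2 * t * (z \<bullet> (A *v v)) + t^2 * (z \<bullet> (A *v z))"
proof -
  have "v \<bullet> (A *v z) = z \<bullet> (A *v v)"
    using sym_mat_inner[OF assms, of z v] by (simp add: inner_commute)
  then show ?thesis
    by (simp add: matrix_vector_right_distrib matrix_vector_mult_scaleR inner_add_left
        inner_add_right power2_eq_square algebra_simps)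
qed

lemma nonpos_if_quadratic_nonpos:
  fixes a C :: real
  assumes "\<And>t. t > 0 \<Longrightarrow> 2 * t * a + t^2 * C \<le> 0"
  shows "a \<le> 0"
proof (rule ccontr)
  assume "\<not> a \<le> 0"
  define t where "t = a / (\<bar>C\<bar> + 1)"
  have t: "t > 0" using \<open>\<not> a \<le> 0\<close> by (simp add: t_def)
  have "t * \<bar>C\<bar> < a"
    using \<open>\<not> a \<le> 0\<close> by (simp add: t_def field_simps)
  then have "t * t * \<bar>C\<bar> < t * a"
    using mult_strict_left_mono[OF _ t] by (simp add: mult.assoc)
  moreover have "- (t * t * \<bar>C\<bar>) \<le> t * t * C"
    using mult_left_mono[of "- \<bar>C\<bar>" C "t * t"] by simp
  moreover have "0 < t * a" using t \<open>\<not> a \<le> 0\<close> by simp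
  ultimately have "0 < 2 * t * a + t^2 * C" unfolding power2_eq_square by linarith
  then show False using assms[OF t] by simp
qed

lemma quadratic_form_max_on_subspace:
  fixes A :: "real^'n^'n"
  assumes V: "subspace V" and ne: "V \<noteq> {0}"
  obtains v where "v \<in> V" "norm v = 1" "\<And>w. w \<in> V \<Longrightarrow> w \<bullet> (A *v w) \<le> (v \<bullet> (A *v v)) * (w \<bullet> w)"
proof -
  define S where "S = V \<inter> sphere 0 1"
  have compact: "compact S" unfolding S_def
    by (rule closed_Int_compact) (simp_all add: V closed_subspace)
  obtain x where x: "x \<in> V" "x \<noteq> 0" using ne V subspace_0 by blast
  then have "(1 / norm x) *\<^sub>R x \<in> S" unfolding S_def using V by (simp add: subspace_scale)
  then have nonempty: "S \<noteq> {}" by blast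
  have cont: "continuous_on S (\<lambda>w. w \<bullet> (A *v w))"
    by (intro continuous_intros linear_continuous_on bounded_linear_intros)
      (simp add: linear_conv_bounded_linear[symmetric])
  obtain v where v: "v \<in> S" and vmax: "\<And>w. w \<in> S \<Longrightarrow> w \<bullet> (A *v w) \<le> v \<bullet> (A *v v)"
    using continuous_attains_sup[OF compact nonempty cont] by blast
  have "w \<bullet> (A *v w) \<le> (v \<bullet> (A *v v)) * (w \<bullet> w)" if w: "w \<in> V" for w
  proof (cases "w = 0")
    case False
    define u where "u = (1 / norm w) *\<^sub>R w"
    have "u \<in> S" unfolding S_def u_def using w False V by (simp add: subspace_scale)
    then have "u \<bullet> (A *v u) \<le> v \<bullet> (A *v v)" by (rule vmax)
    moreover have "u \<bullet> (A *v u) = (w \<bullet> (A *v w)) / (norm w)^2"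
      unfolding u_def by (simp add: matrix_vector_mult_scaleR power2_eq_square)
    moreover have "w \<bullet> w = (norm w)^2" by (simp add: power2_norm_eq_inner)
    moreover have "norm w > 0" using False by simp
    ultimately show ?thesis by (simp add: divide_le_eq mult.commute)
  qed simp
  moreover have "v \<in> V" "norm v = 1" using v by (auto simp: S_def)
  ultimately show ?thesis using that by blast
qed

text \<open>Rayleigh: a maximiser of the quadratic form on the unit sphere of an invariant subspace is an
  eigenvector, since moving along the residual \<open>A v - \<mu> v\<close> would otherwise increase the form.\<close>

lemma sym_mat_top_eigenvector:
  fixes A :: "real^'n^'n"
  assumes sym: "sym_mat A" and V: "subspace V" and inv: "\<forall>x\<in>V. A *v x \<in> V" and ne: "V \<noteq> {0}"
  obtains v \<mu> where "v \<in> V" "norm v = 1" "A *v v = \<mu> *\<^sub>R v"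
    "\<And>w. w \<in> V \<Longrightarrow> w \<bullet> (A *v w) \<le> \<mu> * (w \<bullet> w)"
proof -
  obtain v where v: "v \<in> V" "norm v = 1"
    and bound: "\<And>w. w \<in> V \<Longrightarrow> w \<bullet> (A *v w) \<le> (v \<bullet> (A *v v)) * (w \<bullet> w)"
    using quadratic_form_max_on_subspace[OF V ne] by blast
  define \<mu> where "\<mu> = v \<bullet> (A *v v)"
  define z where "z = A *v v - \<mu> *\<^sub>R v"
  have vv: "v \<bullet> v = 1" using v by (simp add: norm_eq_1)
  have zV: "z \<in> V" unfolding z_def using inv v V by (simp add: subspace_diff subspace_scale)
  have vz: "v \<bullet> z = 0"
    using vv by (simp add: z_def \<mu>_def inner_diff_right inner_commute)
  have "2 * t * (z \<bullet> z) + t^2 * (z \<bullet> (A *v z) - \<mu> * (z \<bullet> z)) \<le> 0" if "t > 0" for t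
  proof -
    have "v + t *\<^sub>R z \<in> V" using v zV V by (simp add: subspace_add subspace_scale)
    then have le: "(v + t *\<^sub>R z) \<bullet> (A *v (v + t *\<^sub>R z)) \<le> \<mu> * ((v + t *\<^sub>R z) \<bullet> (v + t *\<^sub>R z))"
      using bound \<mu>_def by blast
    have "z \<bullet> (A *v v) = z \<bullet> z"
      using vz by (simp add: z_def inner_diff_right inner_diff_left inner_commute)
    then have form: "(v + t *\<^sub>R z) \<bullet> (A *v (v + t *\<^sub>R z)) = \<mu> + 2 * t * (z \<bullet> z) + t^2 * (z \<bullet> (A *v z))"
      using quadratic_form_add_scaled[OF sym, of v t z] by (simp add: \<mu>_def)
    have norm: "(v + t *\<^sub>R z) \<bullet> (v + t *\<^sub>R z) = 1 + t^2 * (z \<bullet> z)"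
      using vv vz by (simp add: inner_add_left inner_add_right power2_eq_square inner_commute)
    have "\<mu> + 2 * t * (z \<bullet> z) + t^2 * (z \<bullet> (A *v z)) \<le> \<mu> * (1 + t^2 * (z \<bullet> z))"
      using le unfolding form norm .
    then show ?thesis by (simp add: algebra_simps)
  qed
  then have "z \<bullet> z \<le> 0" by (rule nonpos_if_quadratic_nonpos)
  then have "z = 0" by (metis inner_ge_zero inner_eq_zero_iff order_antisym)
  then have "A *v v = \<mu> *\<^sub>R v" by (simp add: z_def)
  then show ?thesis using that v bound \<mu>_def by blast
qed

definition orthonormal :: "'a::real_inner set \<Rightarrow> bool" where
  "orthonormal B \<longleftrightarrow> finite B \<and> pairwise orthogonal B \<and> (\<forall>b\<in>B. norm b = 1)"

lemma orthonormal_inner: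
  assumes "orthonormal B" "b \<in> B" "b' \<in> B"
  shows "b' \<bullet> b = (if b' = b then 1 else 0)"
  using assms unfolding orthonormal_def pairwise_def orthogonal_def by (auto simp: norm_eq_1)

lemma orthonormal_inner_sum:
  assumes "orthonormal B" "b \<in> B"
  shows "b \<bullet> (\<Sum>b'\<in>B. c b' *\<^sub>R b') = c b"
proof -
  have "b \<bullet> (\<Sum>b'\<in>B. c b' *\<^sub>R b') = (\<Sum>b'\<in>B. if b' = b then c b else 0)"
    unfolding inner_sum_right
    using assms unfolding orthonormal_def pairwise_def orthogonal_def
    by (intro sum.cong) (auto simp: inner_commute norm_eq_1)
  also have "\<dots> = c b" using assms by (simp add: orthonormal_def)
  finally show ?thesis .
qed

lemma orthonormal_span_expansion:
  assumes B: "orthonormal B" and x: "x \<in> span B"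
  shows "(\<Sum>b\<in>B. (b \<bullet> x) *\<^sub>R b) = x"
proof -
  define y where "y = x - (\<Sum>b\<in>B. (b \<bullet> x) *\<^sub>R b)"
  have "y \<in> span B" unfolding y_def
    by (intro span_diff x span_sum span_mul span_base) auto
  moreover have "orthogonal y b" if "b \<in> B" for b
    using orthonormal_inner_sum[OF B that, of "\<lambda>b. b \<bullet> x"]
    by (simp add: y_def orthogonal_def inner_diff_right inner_commute)
  ultimately have "orthogonal y y" using orthogonal_to_span by blast
  then show ?thesis by (simp add: y_def orthogonal_def)
qed

lemma subset_span_insert_unit_vector:
  assumes V: "subspace V" and v: "v \<in> V" "v \<bullet> v = 1" and B: "{w \<in> V. v \<bullet> w = 0} \<subseteq> span B"
  shows "V \<subseteq> span (insert v B)"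
proof
  fix w assume "w \<in> V"
  then have "w - (v \<bullet> w) *\<^sub>R v \<in> {w \<in> V. v \<bullet> w = 0}"
    using V v by (simp add: subspace_diff subspace_scale inner_diff_right)
  then have "w - (v \<bullet> w) *\<^sub>R v \<in> span (insert v B)"
    using B span_mono[of B "insert v B"] by blast
  then show "w \<in> span (insert v B)"
    by (metis diff_add_cancel insertI1 span_add span_base span_mul)
qed

lemma sym_mat_invariant_subspace_eigenbasis:
  fixes A :: "real^'n^'n"
  assumes sym: "sym_mat A"
  shows "subspace V \<Longrightarrow> \<forall>x\<in>V. A *v x \<in> V \<Longrightarrow>
    \<exists>B. B \<subseteq> V \<and> orthonormal B \<and> (\<forall>b\<in>B. \<exists>c. A *v b = c *\<^sub>R b) \<and> V \<subseteq> span B"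
proof (induction "dim V" arbitrary: V rule: less_induct)
  case less
  show ?case
  proof (cases "V = {0}")
    case True
    then show ?thesis by (intro exI[of _ "{}"]) (auto simp: orthonormal_def)
  next
    case False
    obtain v \<mu> where v: "v \<in> V" "norm v = 1" "A *v v = \<mu> *\<^sub>R v"
      using sym_mat_top_eigenvector[OF sym less.prems False] by blast
    have vv: "v \<bullet> v = 1" using v by (simp add: norm_eq_1)
    define V' where "V' = {w \<in> V. v \<bullet> w = 0}"
    have sV': "subspace V'" unfolding V'_def subspace_def using less.prems(1)
      by (auto simp: subspace_0 subspace_add subspace_scale inner_add_right)
    have "v \<bullet> (A *v x) = 0" if "x \<in> V'" for x
      using sym_mat_inner[OF sym, of v x] v(3) that by (simp add: V'_def)
    then have iV': "\<forall>x\<in>V'. A *v x \<in> V'"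
      using less.prems(2) by (auto simp: V'_def)
    have "V' \<subseteq> V" "v \<notin> V'" using vv by (auto simp: V'_def)
    then have "V' \<subset> V" using v(1) by blast
    then have "span V' \<subset> span V" using sV' less.prems(1) by (simp add: span_eq_iff[THEN iffD2])
    then have "dim V' < dim V" by (rule dim_psubset)
    from less.hyps[OF this sV' iV'] obtain B' where
      B': "B' \<subseteq> V'" "orthonormal B'" "\<forall>b\<in>B'. \<exists>c. A *v b = c *\<^sub>R b" "V' \<subseteq> span B'" by blast
    have "v \<notin> B'" using B'(1) vv by (auto simp: V'_def)
    then have on: "orthonormal (insert v B')"
      using B'(1,2) v(2) unfolding orthonormal_def
      by (auto simp: pairwise_insert orthogonal_def V'_def inner_commute)
    have "V \<subseteq> span (insert v B')"
      using subset_span_insert_unit_vector[OF less.prems(1) v(1) vv] B'(4) by (simp add: V'_def)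
    then show ?thesis
      using B' v on by (intro exI[of _ "insert v B'"]) (auto simp: V'_def)
  qed
qed

lemma sym_mat_eigenbasis:
  fixes A :: "real^'n^'n"
  assumes "sym_mat A"
  obtains B ev where "orthonormal B" "span B = UNIV" "\<And>b. b \<in> B \<Longrightarrow> A *v b = ev b *\<^sub>R b"
proof -
  obtain B where B: "orthonormal B" "span B = UNIV" and "\<forall>b\<in>B. \<exists>c. A *v b = c *\<^sub>R b"
    using sym_mat_invariant_subspace_eigenbasis[OF assms, of UNIV] by auto
  then obtain ev where "\<forall>b\<in>B. A *v b = ev b *\<^sub>R b" by metis
  then show ?thesis using that B by blast
qed

lemma sym_mat_eigen_inner:
  fixes A :: "real^'n^'n"
  assumes "sym_mat A" "A *v b = c *\<^sub>R b" "A *v u = \<mu> *\<^sub>R u"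
  shows "c * (b \<bullet> u) = \<mu> * (b \<bullet> u)"
  using sym_mat_inner[OF assms(1), of b u] assms(2,3) by simp

lemma finite_sym_mat_eigenvalues:
  fixes A :: "real^'n^'n"
  assumes sym: "sym_mat A"
  shows "finite {c. \<exists>v. v \<noteq> 0 \<and> A *v v = c *\<^sub>R v}"
proof -
  obtain B ev where B: "orthonormal B" "span B = UNIV" and eig: "\<And>b. b \<in> B \<Longrightarrow> A *v b = ev b *\<^sub>R b"
    using sym_mat_eigenbasis[OF sym] by blast
  have "{c. \<exists>v. v \<noteq> 0 \<and> A *v v = c *\<^sub>R v} \<subseteq> ev ` B"
  proof safe
    fix c u assume u: "u \<noteq> 0" "A *v u = c *\<^sub>R u"
    have "\<exists>b\<in>B. b \<bullet> u \<noteq> 0"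
    proof (rule ccontr)
      assume "\<not> ?thesis"
      then have "u = 0" using orthonormal_span_expansion[OF B(1), of u] B(2) by simp
      then show False using u by simp
    qed
    then obtain b where b: "b \<in> B" "b \<bullet> u \<noteq> 0" by blast
    have "ev b * (b \<bullet> u) = c * (b \<bullet> u)" by (rule sym_mat_eigen_inner[OF sym eig[OF b(1)] u(2)])
    then have "c = ev b" using b(2) by simp
    then show "c \<in> ev ` B" using b(1) by blast
  qed
  moreover have "finite B" using B by (simp add: orthonormal_def)
  ultimately show ?thesis using finite_subset by blast
qed

lemma eigenvalue_le_lambda_max:
  fixes A :: "real^'n^'n"
  assumes "sym_mat A" "v \<noteq> 0" "A *v v = c *\<^sub>R v"
  shows "c \<le> lambda_max A"
  unfolding lambda_max_def
  by (intro Max_ge finite_sym_mat_eigenvalues[OF assms(1)]) (use assms(2,3) in blast)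

lemma sym_mat_top_eigenvector_UNIV:
  fixes A :: "real^'n^'n"
  assumes "sym_mat A"
  obtains v \<mu> where "norm v = 1" "A *v v = \<mu> *\<^sub>R v" "\<mu> \<le> lambda_max A"
    "\<And>w. w \<bullet> (A *v w) \<le> \<mu> * (w \<bullet> w)"
proof -
  have "(axis undefined 1 :: real^'n) \<noteq> 0" by (simp add: axis_eq_0_iff)
  then have ne: "(UNIV :: (real^'n) set) \<noteq> {0}" by blast
  obtain v \<mu> where "v \<in> UNIV" and v: "norm v = 1" "A *v v = \<mu> *\<^sub>R v"
    and bound: "\<And>w. w \<in> UNIV \<Longrightarrow> w \<bullet> (A *v w) \<le> \<mu> * (w \<bullet> w)"
    using sym_mat_top_eigenvector[OF assms subspace_UNIV _ ne] by blast
  have "v \<noteq> 0" using v(1) by auto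
  then have "\<mu> \<le> lambda_max A" by (rule eigenvalue_le_lambda_max[OF assms _ v(2)])
  moreover have "w \<bullet> (A *v w) \<le> \<mu> * (w \<bullet> w)" for w using bound by simp
  ultimately show ?thesis using that[OF v] by blast
qed

lemma quadratic_form_le_lambda_max:
  fixes A :: "real^'n^'n"
  assumes "sym_mat A"
  shows "w \<bullet> (A *v w) \<le> lambda_max A * (w \<bullet> w)"
proof -
  obtain v \<mu> where "norm v = 1" "A *v v = \<mu> *\<^sub>R v" "\<mu> \<le> lambda_max A"
    and "\<And>w. w \<bullet> (A *v w) \<le> \<mu> * (w \<bullet> w)"
    using sym_mat_top_eigenvector_UNIV[OF assms] by blast
  moreover have "\<mu> * (w \<bullet> w) \<le> lambda_max A * (w \<bullet> w)"
    using \<open>\<mu> \<le> lambda_max A\<close> by (rule mult_right_mono) simp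
  ultimately show ?thesis by (meson order_trans)
qed

lemma lambda_max_nonneg:
  fixes A :: "real^'n^'n"
  assumes "psd A"
  shows "0 \<le> lambda_max A"
proof -
  have "sym_mat A" using assms by (simp add: psd_def)
  then obtain v \<mu> where v: "norm v = 1" "A *v v = \<mu> *\<^sub>R v" "\<mu> \<le> lambda_max A"
    using sym_mat_top_eigenvector_UNIV by blast
  have "0 \<le> v \<bullet> (A *v v)" using assms by (simp add: psd_def)
  also have "\<dots> = \<mu>" using v by (simp add: norm_eq_1)
  finally show ?thesis using v(3) by simp
qed

lemma quadratic_form_DLD_le:
  fixes D L :: "real^'n^'n"
  assumes "sym_mat D" "loewner_le (D ** L ** D) D"
  shows "(D *v x) \<bullet> (L *v (D *v x)) \<le> x \<bullet> (D *v x)"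
proof -
  have "0 \<le> x \<bullet> ((D - D ** L ** D) *v x)" using assms(2) by (simp add: loewner_le_def psd_def)
  moreover have "x \<bullet> ((D ** L ** D) *v x) = (D *v x) \<bullet> (L *v (D *v x))"
    using sym_mat_inner[OF assms(1), of x "L *v (D *v x)"] by (simp add: matrix_vector_mul_assoc[symmetric])
  ultimately show ?thesis by (simp add: matrix_vector_mult_diff_rdistrib inner_diff_right)
qed

section \<open>Square roots of positive semidefinite matrices\<close>

definition self_outer :: "real^'n \<Rightarrow> real^'n^'n" where
  "self_outer b = (\<chi> i j. b $ i * b $ j)"

lemma self_outer_mult: "self_outer b *v x = (b \<bullet> x) *\<^sub>R b"
proof -
  have "(\<Sum>j\<in>UNIV. b $ i * b $ j * x $ j) = (\<Sum>j\<in>UNIV. b $ j * x $ j) * b $ i" for i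
    unfolding sum_distrib_right by (rule sum.cong) auto
  then show ?thesis by (simp add: self_outer_def vec_eq_iff matrix_vector_mult_def inner_vec_def)
qed

lemma matrix_vector_mult_sum_left:
  fixes M :: "'i \<Rightarrow> real^'n^'m"
  shows "(\<Sum>i\<in>I. M i) *v x = (\<Sum>i\<in>I. M i *v x)"
  by (induction I rule: infinite_finite_induct) (auto simp: matrix_vector_mult_add_rdistrib)

lemma matrix_vector_mult_sum_right:
  fixes A :: "real^'n^'m"
  shows "A *v (\<Sum>i\<in>I. v i) = (\<Sum>i\<in>I. A *v v i)"
  by (simp add: linear_sum[OF matrix_vector_mul_linear] o_def)

lemma matrix_eqI_on_spanning:
  fixes A C :: "real^'n^'m"
  assumes "span B = UNIV" "\<And>b. b \<in> B \<Longrightarrow> A *v b = C *v b"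
  shows "A = C"
  using linear_eq_on_span[OF matrix_vector_mul_linear matrix_vector_mul_linear, of B A C] assms
  by (simp add: matrix_eq)

lemma psd_sqrt_exists:
  fixes A :: "real^'n^'n"
  assumes psd: "psd A"
  obtains S where "psd S" "S ** S = A"
proof -
  obtain B ev where B: "orthonormal B" "span B = UNIV" and eig: "\<And>b. b \<in> B \<Longrightarrow> A *v b = ev b *\<^sub>R b"
    using sym_mat_eigenbasis psd unfolding psd_def by blast
  have ev_nonneg: "ev b \<ge> 0" if "b \<in> B" for b
  proof -
    have "0 \<le> b \<bullet> (A *v b)" using psd by (simp add: psd_def)
    also have "\<dots> = ev b" using eig that B(1) by (simp add: orthonormal_def norm_eq_1)
    finally show ?thesis .
  qed
  define S where "S = (\<Sum>b\<in>B. sqrt (ev b) *\<^sub>R self_outer b)"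
  have S: "S *v x = (\<Sum>b\<in>B. (sqrt (ev b) * (b \<bullet> x)) *\<^sub>R b)" for x
    unfolding S_def matrix_vector_mult_sum_left
    by (simp add: scaleR_matrix_vector_assoc[symmetric] self_outer_mult)
  have S_inner: "x \<bullet> (S *v y) = (\<Sum>b\<in>B. sqrt (ev b) * (b \<bullet> x) * (b \<bullet> y))" for x y
    unfolding S inner_sum_right by (intro sum.cong refl) (simp add: inner_commute[of x])
  have "sym_mat S"
    by (rule sym_matI) (simp add: inner_commute[of "S *v _"] S_inner mult_ac)
  moreover have "0 \<le> x \<bullet> (S *v x)" for x
    unfolding S_inner using ev_nonneg by (intro sum_nonneg) (simp add: mult.assoc)
  ultimately have "psd S" by (simp add: psd_def)
  moreover have "S ** S = A"
  proof (rule matrix_eqI_on_spanning[OF B(2)])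
    fix b assume b: "b \<in> B"
    have "S *v b = (\<Sum>b'\<in>B. if b' = b then sqrt (ev b) *\<^sub>R b else 0)"
      unfolding S by (intro sum.cong refl) (simp add: orthonormal_inner[OF B(1) b])
    then have "S *v b = sqrt (ev b) *\<^sub>R b"
      using b B(1) by (simp add: orthonormal_def)
    then show "(S ** S) *v b = A *v b"
      using eig[OF b] ev_nonneg[OF b]
      by (simp add: matrix_vector_mul_assoc[symmetric] matrix_vector_mult_scaleR)
  qed
  ultimately show ?thesis using that by blast
qed

lemma psd_sqrt_eigenvector:
  fixes S :: "real^'n^'n"
  assumes S: "psd S" "S ** S = A" and u: "A *v u = \<mu> *\<^sub>R u"
  shows "S *v u = sqrt \<mu> *\<^sub>R u"
proof -
  have sym: "sym_mat S" using S by (simp add: psd_def)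
  obtain C s where C: "orthonormal C" "span C = UNIV" and eig: "\<And>c. c \<in> C \<Longrightarrow> S *v c = s c *\<^sub>R c"
    using sym_mat_eigenbasis[OF sym] by blast
  have s: "s c * (c \<bullet> u) = sqrt \<mu> * (c \<bullet> u)" if c: "c \<in> C" for c
  proof -
    have "0 \<le> c \<bullet> (S *v c)" using S(1) by (simp add: psd_def)
    then have s_nonneg: "0 \<le> s c" using eig[OF c] orthonormal_inner[OF C(1) c c] by simp
    have "A *v c = (s c)^2 *\<^sub>R c"
      using eig[OF c] S(2)[symmetric] by (simp add: matrix_vector_mul_assoc[symmetric] matrix_vector_mult_scaleR power2_eq_square)
    then have "(s c)^2 * (c \<bullet> u) = \<mu> * (c \<bullet> u)"
      by (rule sym_mat_eigen_inner[OF sym_mat_square[OF sym, unfolded S(2)] _ u])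
    then show ?thesis using s_nonneg by (cases "c \<bullet> u = 0") auto
  qed
  have expansion: "(\<Sum>c\<in>C. (c \<bullet> u) *\<^sub>R c) = u"
    using orthonormal_span_expansion[OF C(1)] C(2) by blast
  have "S *v u = (\<Sum>c\<in>C. (c \<bullet> u) *\<^sub>R (S *v c))"
    by (subst (1) expansion[symmetric]) (simp add: matrix_vector_mult_sum_right matrix_vector_mult_scaleR)
  also have "\<dots> = sqrt \<mu> *\<^sub>R (\<Sum>c\<in>C. (c \<bullet> u) *\<^sub>R c)"
    unfolding scaleR_sum_right
  proof (intro sum.cong refl)
    fix c assume c: "c \<in> C"
    have "(c \<bullet> u) *\<^sub>R (S *v c) = (s c * (c \<bullet> u)) *\<^sub>R c" by (simp add: eig[OF c])
    then show "(c \<bullet> u) *\<^sub>R (S *v c) = sqrt \<mu> *\<^sub>R (c \<bullet> u) *\<^sub>R c" by (simp add: s[OF c])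
  qed
  also have "\<dots> = sqrt \<mu> *\<^sub>R u" by (simp only: expansion)
  finally show ?thesis .
qed

lemma psd_sqrt_unique:
  fixes S S' :: "real^'n^'n"
  assumes "psd S" "S ** S = A" "psd S'" "S' ** S' = A"
  shows "S = S'"
proof -
  have "sym_mat (S ** S)" using assms(1) by (intro sym_mat_square) (simp add: psd_def)
  then have "sym_mat A" using assms(2) by simp
  then obtain B ev where "orthonormal B" and B: "span B = UNIV"
    and eig: "\<And>b. b \<in> B \<Longrightarrow> A *v b = ev b *\<^sub>R b"
    using sym_mat_eigenbasis by blast
  show ?thesis
  proof (rule matrix_eqI_on_spanning[OF B])
    fix b assume "b \<in> B"
    then show "S *v b = S' *v b"
      using psd_sqrt_eigenvector[OF assms(1,2) eig] psd_sqrt_eigenvector[OF assms(3,4) eig] by simp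
  qed
qed

lemma
  fixes A :: "real^'n^'n"
  assumes "psd A"
  shows psd_msqrt: "psd (msqrt A)" and msqrt_square: "msqrt A ** msqrt A = A"
proof -
  obtain S where S: "psd S" "S ** S = A" using psd_sqrt_exists[OF assms] by blast
  have "msqrt A = S" unfolding msqrt_def
  proof (rule the_equality)
    show "psd S \<and> S ** S = A" using S by simp
    show "S' = S" if "psd S' \<and> S' ** S' = A" for S'
      using psd_sqrt_unique[of S' A S] that S by simp
  qed
  then show "psd (msqrt A)" "msqrt A ** msqrt A = A" using S by simp_all
qed

lemma inj_pd:
  fixes A :: "real^'n^'n"
  assumes "pd A"
  shows "inj ((*v) A)"
proof (rule linear_injective_0[OF matrix_vector_mul_linear, THEN iffD2], intro allI impI)
  fix x assume "A *v x = 0"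
  then show "x = 0" using assms unfolding pd_def by (metis inner_zero_right less_irrefl)
qed

lemma surj_pd:
  fixes A :: "real^'n^'n"
  assumes "pd A"
  shows "surj ((*v) A)"
  using linear_inj_imp_surj[OF matrix_vector_mul_linear inj_pd[OF assms]] .

lemma surj_msqrt:
  fixes A :: "real^'n^'n"
  assumes "pd A"
  shows "surj ((*v) (msqrt A))"
proof -
  have "y \<in> range ((*v) (msqrt A))" for y
  proof -
    obtain x where "A *v x = y" using surj_pd[OF assms] by (metis surjD)
    then have "msqrt A *v (msqrt A *v x) = y"
      using msqrt_square[OF pd_imp_psd[OF assms]] by (simp add: matrix_vector_mul_assoc)
    then show ?thesis by blast
  qed
  then show ?thesis by blast
qed

lemma invertible_iff_surj: "invertible (A::real^'n^'n) \<longleftrightarrow> surj ((*v) A)"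
  by (simp add: invertible_right_inverse matrix_right_invertible_surjective)

lemma det_pos_pd:
  fixes D :: "real^'n^'n"
  assumes "pd D"
  shows "det D > 0"
proof -
  have "det D \<noteq> 0" using det_nz_iff_inj[of "(*v) D"] inj_pd[OF assms] by simp
  moreover have "det D = det (msqrt D) * det (msqrt D)"
    using msqrt_square[OF pd_imp_psd[OF assms]] det_mul by metis
  ultimately show ?thesis using zero_le_square[of "det (msqrt D)"] by linarith
qed

section \<open>Measurability and integrals of matrix-valued functions\<close>

lemma borel_measurable_matrix_vector_mult[measurable (raw)]:
  fixes A :: "'a \<Rightarrow> real^'n^'m"
  assumes "A \<in> borel_measurable N" "v \<in> borel_measurable N"
  shows "(\<lambda>x. A x *v v x) \<in> borel_measurable N"
proof -
  have "continuous_on UNIV (\<lambda>p::(real^'n^'m) \<times> (real^'n). fst p *v snd p)"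
    unfolding matrix_vector_mult_def by (intro continuous_intros)
  from borel_measurable_continuous_Pair[OF assms this] show ?thesis by simp
qed

lemma borel_measurable_matrix_mult[measurable (raw)]:
  fixes A :: "'a \<Rightarrow> real^'n^'m" and B :: "'a \<Rightarrow> real^'k^'n"
  assumes "A \<in> borel_measurable N" "B \<in> borel_measurable N"
  shows "(\<lambda>x. A x ** B x) \<in> borel_measurable N"
proof -
  have "continuous_on UNIV (\<lambda>p::(real^'n^'m) \<times> (real^'k^'n). fst p ** snd p)"
    unfolding matrix_matrix_mult_def by (intro continuous_intros)
  from borel_measurable_continuous_Pair[OF assms this] show ?thesis by simp
qed

lemma borel_measurable_vec_nth[measurable (raw)]:
  fixes v :: "'a \<Rightarrow> ('b::real_normed_vector)^'n"
  assumes "v \<in> borel_measurable N"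
  shows "(\<lambda>x. v x $ i) \<in> borel_measurable N"
  using borel_measurable_continuous_on[OF _ assms, of "\<lambda>y. y $ i"]
  by (simp add: linear_continuous_on bounded_linear_vec_nth)

lemma borel_measurable_transpose[measurable (raw)]:
  fixes A :: "'a \<Rightarrow> real^'n^'m"
  assumes "A \<in> borel_measurable N"
  shows "(\<lambda>x. transpose (A x)) \<in> borel_measurable N"
proof -
  have "continuous_on UNIV (\<lambda>A::real^'n^'m. transpose A)"
    unfolding transpose_def by (intro continuous_intros)
  then show ?thesis using borel_measurable_continuous_on[OF _ assms] by blast
qed

text \<open>The gradient is the pointwise limit of the continuous difference quotients along the axes.\<close>

lemma borel_measurable_gradient:
  fixes g :: "real^'d \<Rightarrow> real" and gg :: "real^'d \<Rightarrow> real^'d"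
  assumes der: "\<And>y. (g has_derivative (\<lambda>h. gg y \<bullet> h)) (at y)"
  shows "gg \<in> borel_measurable borel"
proof -
  have cont: "continuous_on UNIV g"
    using der by (intro continuous_at_imp_continuous_on) (auto intro: has_derivative_continuous)
  define q where "q m y = (\<chi> j. (g (y + (1 / real (Suc m)) *\<^sub>R axis j 1) - g y) / (1 / real (Suc m)))" for m y
  have "q m \<in> borel_measurable borel" for m
  proof -
    have "continuous_on UNIV (q m)" unfolding q_def
      by (intro continuous_intros continuous_on_compose2[OF cont]) auto
    then show ?thesis by (rule borel_measurable_continuous_onI)
  qed
  moreover have "(\<lambda>m. q m y) \<longlonglongrightarrow> gg y" for y
  proof (rule vec_tendstoI)
    fix j
    define e :: "real^'d" where "e = axis j 1"
    have "((\<lambda>t::real. y + t *\<^sub>R e) has_derivative (\<lambda>t. t *\<^sub>R e)) (at 0)"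
      by (auto intro!: derivative_eq_intros)
    from has_derivative_compose[OF this der[of "y + 0 *\<^sub>R e"]]
    have "((\<lambda>t. g (y + t *\<^sub>R e)) has_field_derivative (gg y \<bullet> e)) (at 0)"
      unfolding has_field_derivative_def by (simp add: mult.commute[of _ "gg y \<bullet> e"])
    then have "((\<lambda>t. (g (y + t *\<^sub>R e) - g y) / t) \<longlongrightarrow> gg y \<bullet> e) (at 0)"
      unfolding has_field_derivative_iff by simp
    moreover have "(\<lambda>m. 1 / real (Suc m)) \<longlonglongrightarrow> 0" by (rule LIMSEQ_Suc[OF lim_const_over_n])
    ultimately have "(\<lambda>m. (g (y + (1 / real (Suc m)) *\<^sub>R e) - g y) / (1 / real (Suc m))) \<longlonglongrightarrow> gg y \<bullet> e"
      by (rule_tac LIMSEQ_SEQ_conv[THEN iffD2, rule_format]) auto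
    then show "(\<lambda>m. q m y $ j) \<longlonglongrightarrow> gg y $ j" unfolding q_def e_def by (simp add: inner_axis)
  qed
  ultimately show ?thesis by (rule borel_measurable_LIMSEQ_metric)
qed

lemma matrix_add_rdistrib: "((A::real^'n^'m) + B) ** C = A ** C + B ** C"
  by (vector matrix_matrix_mult_def sum.distrib[symmetric] field_simps)

lemma bounded_linear_matrix_sandwich: "bounded_linear (\<lambda>A::real^'n^'n. B ** A ** C)"
proof -
  have "linear (\<lambda>A::real^'n^'n. B ** A ** C)"
    by (rule linearI)
      (simp_all add: matrix_add_ldistrib matrix_add_rdistrib matrix_scalar_ac scalar_matrix_assoc)
  then show ?thesis by (simp add: linear_conv_bounded_linear)
qed

lemma bounded_linear_matrix_entry: "bounded_linear (\<lambda>A::real^'n^'m. A $ p $ q)"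
  using bounded_linear_compose[OF bounded_linear_vec_nth[of q] bounded_linear_vec_nth[of p]]
  by (simp add: o_def)

lemma bounded_linear_transpose: "bounded_linear (\<lambda>A::real^'n^'n. transpose A)"
proof -
  have "linear (\<lambda>A::real^'n^'n. transpose A)"
    by (rule linearI) (simp_all add: transpose_def vec_eq_iff)
  then show ?thesis by (simp add: linear_conv_bounded_linear)
qed

lemma bounded_linear_quadratic_form: "bounded_linear (\<lambda>A::real^'n^'n. h \<bullet> (A *v h))"
proof -
  have "linear (\<lambda>A::real^'n^'n. h \<bullet> (A *v h))"
    by (rule linearI)
      (simp_all add: matrix_vector_mult_add_rdistrib inner_add_right scaleR_matrix_vector_assoc[symmetric])
  then show ?thesis by (simp add: linear_conv_bounded_linear)
qed

lemma integral_matrix_entry: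
  fixes F :: "'a \<Rightarrow> real^'n^'m"
  assumes "integrable M F"
  shows "(\<integral>\<omega>. F \<omega> \<partial>M) $ p $ q = (\<integral>\<omega>. F \<omega> $ p $ q \<partial>M)"
  using integral_bounded_linear[OF bounded_linear_matrix_entry assms] by simp

lemma integrable_matrix_entry:
  fixes F :: "'a \<Rightarrow> real^'n^'m"
  assumes "integrable M F"
  shows "integrable M (\<lambda>\<omega>. F \<omega> $ p $ q)"
  using integrable_bounded_linear[OF bounded_linear_matrix_entry assms] by simp

lemma inner_matrix_vector_entries:
  "a \<bullet> (X *v b) = (\<Sum>p\<in>UNIV. \<Sum>q\<in>UNIV. (a $ p * b $ q) * X $ p $ q)"
  unfolding inner_vec_def matrix_vector_mult_def
  by (simp add: sum_distrib_left) (intro sum.cong refl, simp add: mult_ac)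

lemma inner_sum_sum:
  "(\<Sum>j\<in>J. a j) \<bullet> (\<Sum>i\<in>I. b i) = (\<Sum>j\<in>J. \<Sum>i\<in>I. (a j :: 'a::real_inner) \<bullet> b i)"
  unfolding inner_sum_left by (simp add: inner_sum_right)

lemma transpose_mult_mult_entry:
  fixes A B L :: "real^'n^'n"
  shows "(transpose A ** L ** B) $ p $ s = (\<Sum>r\<in>UNIV. \<Sum>q\<in>UNIV. L $ q $ r * (A $ q $ p * B $ r $ s))"
  by (simp add: matrix_matrix_mult_def transpose_def sum_distrib_right sum_distrib_left mult_ac)

lemma matrix_diff_id_sandwich:
  fixes t L :: "real^'n^'n"
  shows "(t - mat 1) ** L ** (t - mat 1) = t ** L ** t - t ** L - L ** t + L"
proof -
  have "((t - mat 1) ** L ** (t - mat 1)) *v x = (t ** L ** t - t ** L - L ** t + L) *v x" for x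
    by (simp add: matrix_vector_mul_assoc[symmetric] matrix_vector_mult_diff_rdistrib
        matrix_vector_mult_add_rdistrib matrix_vector_mult_diff_distrib)
  then show ?thesis by (simp add: matrix_eq)
qed

lemma transpose_diff_mat_1: "transpose (A - mat 1 :: real^'n^'n) = transpose A - mat 1"
  by (simp add: transpose_def mat_def vec_eq_iff)

lemma integrable_cancel_invertible_sandwich:
  fixes X :: "'a \<Rightarrow> real^'n^'n" and P Q :: "real^'n^'n"
  assumes "invertible P" "invertible Q" "integrable M (\<lambda>\<omega>. P ** X \<omega> ** Q)"
  shows "integrable M X"
proof -
  obtain P' Q' where P': "P' ** P = mat 1" and Q': "Q ** Q' = mat 1"
    using assms(1,2) invertible_left_inverse[of P] invertible_right_inverse[of Q] by blast
  have "P' ** (P ** Y ** Q) ** Q' = Y" for Y :: "real^'n^'n"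
    by (metis P' Q' matrix_mul_assoc matrix_mul_lid matrix_mul_rid)
  moreover have "integrable M (\<lambda>\<omega>. P' ** (P ** X \<omega> ** Q) ** Q')"
    by (rule integrable_bounded_linear[OF bounded_linear_matrix_sandwich assms(3)])
  ultimately show ?thesis by simp
qed

lemma psd_integral:
  fixes F :: "'a \<Rightarrow> real^'n^'n"
  assumes F: "integrable M F" and psd: "AE \<omega> in M. psd (F \<omega>)"
  shows "psd (integral\<^sup>L M F)"
proof -
  have meas: "F \<in> borel_measurable M" using F by auto
  have "transpose (integral\<^sup>L M F) = (\<integral>\<omega>. transpose (F \<omega>) \<partial>M)"
    using integral_bounded_linear[OF bounded_linear_transpose F] by simp
  also have "\<dots> = integral\<^sup>L M F"
    using psd meas by (intro integral_cong_AE) (auto simp: psd_def sym_mat_def)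
  finally have "sym_mat (integral\<^sup>L M F)" by (simp add: sym_mat_def)
  moreover have "0 \<le> h \<bullet> (integral\<^sup>L M F *v h)" for h
  proof -
    have "h \<bullet> (integral\<^sup>L M F *v h) = (\<integral>\<omega>. h \<bullet> (F \<omega> *v h) \<partial>M)"
      using integral_bounded_linear[OF bounded_linear_quadratic_form F] by simp
    also have "\<dots> \<ge> 0"
      using psd by (intro integral_nonneg_AE) (auto simp: psd_def)
    finally show ?thesis .
  qed
  ultimately show ?thesis by (simp add: psd_def)
qed

lemma integral_double_sum:
  fixes t :: "nat \<Rightarrow> nat \<Rightarrow> 'a \<Rightarrow> real"
  assumes "\<And>j i. j < n \<Longrightarrow> i < n \<Longrightarrow> integrable M (t j i)"
  shows "integrable M (\<lambda>\<omega>. \<Sum>j<n. \<Sum>i<n. t j i \<omega>)"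
    and "(\<integral>\<omega>. (\<Sum>j<n. \<Sum>i<n. t j i \<omega>) \<partial>M) = (\<Sum>j<n. \<Sum>i<n. integral\<^sup>L M (t j i))"
proof -
  have inner: "integrable M (\<lambda>\<omega>. \<Sum>i<n. t j i \<omega>)" if "j < n" for j
    using assms that by (intro Bochner_Integration.integrable_sum) auto
  show "integrable M (\<lambda>\<omega>. \<Sum>j<n. \<Sum>i<n. t j i \<omega>)"
    by (rule Bochner_Integration.integrable_sum) (use inner in simp)
  show "(\<integral>\<omega>. (\<Sum>j<n. \<Sum>i<n. t j i \<omega>) \<partial>M) = (\<Sum>j<n. \<Sum>i<n. integral\<^sup>L M (t j i))"
    using assms inner by (simp add: Bochner_Integration.integral_sum)
qed

section \<open>Smooth functions and square integrability\<close>

text \<open>Descending from \<open>y\<close> along \<open>w = L\<^sup>-\<^sup>1 \<nabla>g(y)\<close> decreases \<open>g\<close> by at least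
  \<open>\<nabla>g(y) \<bullet> w / 2\<close>, and the lower bound caps this decrease at \<open>g(y) - c\<close>.\<close>

lemma matrix_smooth_gradient_bound:
  fixes g :: "real^'d \<Rightarrow> real" and gg :: "real^'d \<Rightarrow> real^'d"
  assumes pd: "pd L" and smooth: "matrix_smooth L g gg" and lower: "\<And>z. c \<le> g z"
  obtains h where "gg y = msqrt L *v h" "h \<bullet> h \<le> 2 * (g y - c)"
proof -
  let ?S = "msqrt L"
  have S_sym: "sym_mat ?S" using psd_msqrt[OF pd_imp_psd[OF pd]] by (simp add: psd_def)
  obtain h where h: "gg y = ?S *v h" using surj_msqrt[OF pd] by (metis surjD)
  obtain w where w: "h = ?S *v w" using surj_msqrt[OF pd] by (metis surjD)
  have "g (y - w) \<le> g y + gg y \<bullet> ((y - w) - y) + 1/2 * ((L *v ((y - w) - y)) \<bullet> ((y - w) - y))"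
    using smooth unfolding matrix_smooth_def by blast
  moreover have "gg y \<bullet> ((y - w) - y) = - (h \<bullet> h)"
    using sym_mat_inner[OF S_sym, of h w] h w by simp
  moreover have "(L *v ((y - w) - y)) \<bullet> ((y - w) - y) = h \<bullet> h"
  proof -
    have "L *v w = ?S *v h"
      using msqrt_square[OF pd_imp_psd[OF pd]] w by (simp add: matrix_vector_mul_assoc)
    moreover have "(y - w) - y = (-1) *\<^sub>R w" by simp
    ultimately have "(L *v ((y - w) - y)) \<bullet> ((y - w) - y) = (?S *v h) \<bullet> w"
      by (simp only: matrix_vector_mult_scaleR) simp
    then show ?thesis using sym_mat_inner[OF S_sym, of h w] w by simp
  qed
  ultimately have "g (y - w) \<le> g y - 1/2 * (h \<bullet> h)" by simp
  then have "h \<bullet> h \<le> 2 * (g y - c)" using lower[of "y - w"] by simp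
  then show ?thesis using that h by blast
qed

lemma matrix_smooth_gradient_norm_bound:
  fixes g :: "real^'d \<Rightarrow> real" and gg :: "real^'d \<Rightarrow> real^'d"
  assumes "pd L" "matrix_smooth L g gg" "\<And>z. c \<le> g z"
  shows "(norm (gg y))^2 \<le> 2 * (onorm ((*v) (msqrt L)))^2 * (g y - c)"
proof -
  obtain h where h: "gg y = msqrt L *v h" "h \<bullet> h \<le> 2 * (g y - c)"
    using matrix_smooth_gradient_bound[OF assms] by blast
  have "norm (gg y) \<le> onorm ((*v) (msqrt L)) * norm h"
    unfolding h by (rule onorm[OF matrix_vector_mul_bounded_linear])
  then have "(norm (gg y))^2 \<le> (onorm ((*v) (msqrt L)))^2 * (h \<bullet> h)"
    by (metis norm_ge_zero power2_norm_eq_inner power_mono power_mult_distrib)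
  also have "\<dots> \<le> (onorm ((*v) (msqrt L)))^2 * (2 * (g y - c))"
    using h(2) by (intro mult_left_mono) auto
  also have "\<dots> = 2 * (onorm ((*v) (msqrt L)))^2 * (g y - c)" by (simp only: mult_ac)
  finally show ?thesis .
qed

definition square_integrable :: "'a measure \<Rightarrow> ('a \<Rightarrow> real^'n) \<Rightarrow> bool" where
  "square_integrable M a \<longleftrightarrow> a \<in> borel_measurable M \<and> integrable M (\<lambda>\<omega>. (norm (a \<omega>))^2)"

lemma abs_component_product_le:
  fixes a b :: "real^'n"
  shows "\<bar>a $ p * b $ q\<bar> \<le> (norm a)^2 + (norm b)^2"
proof -
  have "\<bar>a $ p * b $ q\<bar> \<le> norm a * norm b"
    unfolding abs_mult by (intro mult_mono component_le_norm_cart) auto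
  also have "\<dots> \<le> (norm a)^2 + (norm b)^2"
    using sum_squares_bound[of "norm a" "norm b"] mult_nonneg_nonneg[OF norm_ge_zero norm_ge_zero, of a b]
    unfolding power2_eq_square by linarith
  finally show ?thesis .
qed

lemma integrable_component_product:
  fixes a b :: "'a \<Rightarrow> real^'n"
  assumes "square_integrable M a" "square_integrable M b"
  shows "integrable M (\<lambda>\<omega>. a \<omega> $ p * b \<omega> $ q)"
proof (rule Bochner_Integration.integrable_bound)
  show "integrable M (\<lambda>\<omega>. (norm (a \<omega>))^2 + (norm (b \<omega>))^2)"
    using assms by (simp add: square_integrable_def)
  show "(\<lambda>\<omega>. a \<omega> $ p * b \<omega> $ q) \<in> borel_measurable M"
    using assms unfolding square_integrable_def by (intro borel_measurable_times borel_measurable_vec_nth) auto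
  show "AE \<omega> in M. norm (a \<omega> $ p * b \<omega> $ q) \<le> norm ((norm (a \<omega>))^2 + (norm (b \<omega>))^2)"
    using abs_component_product_le by (intro AE_I2) simp
qed

lemma square_integrable_matrix_vector_mult:
  fixes a :: "'a \<Rightarrow> real^'n" and A :: "real^'n^'m"
  assumes "square_integrable M a"
  shows "square_integrable M (\<lambda>\<omega>. A *v a \<omega>)"
  unfolding square_integrable_def
proof
  show meas: "(\<lambda>\<omega>. A *v a \<omega>) \<in> borel_measurable M"
    using assms unfolding square_integrable_def by (intro borel_measurable_matrix_vector_mult) auto
  show "integrable M (\<lambda>\<omega>. (norm (A *v a \<omega>))^2)"
  proof (rule Bochner_Integration.integrable_bound)
    show "integrable M (\<lambda>\<omega>. (onorm ((*v) A))^2 * (norm (a \<omega>))^2)"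
      using assms by (simp add: square_integrable_def)
    show "(\<lambda>\<omega>. (norm (A *v a \<omega>))^2) \<in> borel_measurable M" using meas by measurable
    have "(norm (A *v x))^2 \<le> (onorm ((*v) A))^2 * (norm x)^2" for x
      using onorm[OF matrix_vector_mul_bounded_linear, of A x]
      by (metis norm_ge_zero power_mono power_mult_distrib)
    then show "AE \<omega> in M. norm ((norm (A *v a \<omega>))^2) \<le> norm ((onorm ((*v) A))^2 * (norm (a \<omega>))^2)"
      by simp
  qed
qed

lemma integrable_inner_matrix_vector:
  fixes a b :: "'a \<Rightarrow> real^'n" and A :: "real^'n^'n"
  assumes "square_integrable M a" "square_integrable M b"
  shows "integrable M (\<lambda>\<omega>. a \<omega> \<bullet> (A *v b \<omega>))"
  unfolding inner_matrix_vector_entries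
  by (intro Bochner_Integration.integrable_sum integrable_mult_left integrable_component_product assms)

section \<open>A perturbed descent recursion\<close>

text \<open>Unrolling the recursion with the weights \<open>(1 + a)\<^sup>K\<^sup>-\<^sup>1\<^sup>-\<^sup>k\<close>, whose sum is at least \<open>K\<close>.\<close>

lemma min_le_of_perturbed_descent:
  fixes \<delta> r :: "nat \<Rightarrow> real"
  assumes a: "a \<ge> 0" and c: "c > 0" and \<delta>_nonneg: "\<And>k. \<delta> k \<ge> 0"
    and step: "\<And>k. \<delta> (Suc k) \<le> (1 + a) * \<delta> k - (c / 2) * r k + b" and K: "K \<ge> 1"
  shows "Min (r ` {..<K}) \<le> 2 * (1 + a) ^ K * \<delta> 0 / (c * real K) + 2 * b / c"
proof -
  define m where "m = Min (r ` {..<K})"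
  define \<rho> where "\<rho> = 1 + a"
  define V where "V N = (\<Sum>j<N. \<rho> ^ j)" for N
  have \<rho>: "\<rho> \<ge> 1" using a by (simp add: \<rho>_def)
  have V_Suc: "V (Suc N) = \<rho> * V N + 1" for N
    by (simp add: V_def sum.lessThan_Suc_shift sum_distrib_left del: sum.lessThan_Suc)
  have V_ge: "real N \<le> V N" for N
    using sum_mono[of "{..<N}" "\<lambda>_. 1" "\<lambda>j. \<rho> ^ j"] \<rho> by (simp add: V_def one_le_power)
  have m_le: "m \<le> r k" if "k < K" for k
    unfolding m_def using that by (intro Min_le) auto
  have unrolled: "(c / 2) * m * V N \<le> \<rho> ^ N * \<delta> 0 - \<delta> N + b * V N" if "N \<le> K" for N
    using that
  proof (induction N)
    case (Suc N)
    then have "\<rho> * ((c / 2) * m * V N) \<le> \<rho> * (\<rho> ^ N * \<delta> 0 - \<delta> N + b * V N)"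
      using \<rho> by (intro mult_left_mono) auto
    moreover have "(c / 2) * m \<le> (c / 2) * r N" using m_le[of N] Suc.prems c by simp
    moreover have "\<delta> (Suc N) \<le> \<rho> * \<delta> N - (c / 2) * r N + b" using step[of N] by (simp add: \<rho>_def)
    ultimately show ?case by (simp add: V_Suc algebra_simps add_divide_distrib; linarith)
  qed (simp add: V_def)
  have "real K > 0" using K by simp
  then have V_pos: "V K > 0" using V_ge[of K] by linarith
  have "(c / 2) * m * V K \<le> \<rho> ^ K * \<delta> 0 + b * V K"
    using unrolled[of K] \<delta>_nonneg[of K] by simp
  then have "m \<le> 2 * (\<rho> ^ K * \<delta> 0) / (c * V K) + 2 * b / c"
    using c V_pos by (simp add: field_simps)
  also have "2 * (\<rho> ^ K * \<delta> 0) / (c * V K) \<le> 2 * (\<rho> ^ K * \<delta> 0) / (c * real K)"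
    using \<rho> \<delta>_nonneg[of 0] V_ge[of K] c \<open>real K > 0\<close> by (intro divide_left_mono mult_pos_pos) auto
  finally show ?thesis by (simp add: m_def \<rho>_def mult.assoc)
qed

section \<open>Independence structure of the iteration\<close>

lemma iter_cong:
  assumes "\<And>i j. i < n \<Longrightarrow> j < k \<Longrightarrow> T i j \<omega> = T' i j \<omega>'"
  shows "iter n gf T D x0 k \<omega> = iter n gf T' D x0 k \<omega>'"
  using assms by (induction k) auto

locale sketched_iteration = prob_space M for M :: "'a measure" +
  fixes n :: nat and gf :: "nat \<Rightarrow> real^'d \<Rightarrow> real^'d"
    and T :: "nat \<Rightarrow> nat \<Rightarrow> 'a \<Rightarrow> real^'d^'d" and D :: "real^'d^'d" and x0 :: "real^'d"
  assumes gf_measurable[measurable]: "\<And>i. i < n \<Longrightarrow> gf i \<in> borel_measurable borel"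
    and T_measurable: "\<And>i k. i < n \<Longrightarrow> T i k \<in> borel_measurable M"
    and T_indep: "indep_vars (\<lambda>_. borel) (\<lambda>(i, k). T i k) ({..<n} \<times> UNIV)"
begin

abbreviation iterate :: "nat \<Rightarrow> 'a \<Rightarrow> real^'d" where
  "iterate \<equiv> iter n gf T D x0"

abbreviation rounds_before :: "nat \<Rightarrow> (nat \<times> nat) set" where
  "rounds_before k \<equiv> {..<n} \<times> {..<k}"

abbreviation round_at :: "nat \<Rightarrow> (nat \<times> nat) set" where
  "round_at k \<equiv> {..<n} \<times> {k}"

abbreviation sketch_space :: "(nat \<times> nat) set \<Rightarrow> (nat \<times> nat \<Rightarrow> real^'d^'d) measure" where
  "sketch_space A \<equiv> PiM A (\<lambda>_. borel)"

definition sketch_block :: "(nat \<times> nat) set \<Rightarrow> 'a \<Rightarrow> nat \<times> nat \<Rightarrow> real^'d^'d" where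
  "sketch_block A \<omega> = restrict (\<lambda>p. T (fst p) (snd p) \<omega>) A"

definition iter_of_sketches :: "nat \<Rightarrow> (nat \<times> nat \<Rightarrow> real^'d^'d) \<Rightarrow> real^'d" where
  "iter_of_sketches k \<phi> = iter n gf (\<lambda>i j (_::unit). \<phi> (i, j)) D x0 k ()"

lemma iterate_Suc:
  "iterate (Suc k) \<omega> = iterate k \<omega> - (1 / real n) *\<^sub>R (\<Sum>i<n. T i k \<omega> *v (D *v gf i (iterate k \<omega>)))"
  by simp

lemma iterate_eq_iter_of_sketches: "iterate k \<omega> = iter_of_sketches k (sketch_block (rounds_before k) \<omega>)"
  unfolding iter_of_sketches_def sketch_block_def by (rule iter_cong) auto

lemma sketch_block_round_at: "i < n \<Longrightarrow> sketch_block (round_at k) \<omega> (i, k) = T i k \<omega>"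
  by (simp add: sketch_block_def)

lemma measurable_sketch_component:
  "(i, k) \<in> A \<Longrightarrow> (\<lambda>\<phi>. \<phi> (i, k)) \<in> borel_measurable (sketch_space A)"
  by (rule measurable_component_singleton)

lemma measurable_iter_of_sketches:
  "k \<le> m \<Longrightarrow> iter_of_sketches k \<in> borel_measurable (sketch_space (rounds_before m))"
proof (induction k)
  case 0
  then show ?case by (simp add: iter_of_sketches_def)
next
  case (Suc k)
  then have [measurable]: "iter_of_sketches k \<in> borel_measurable (sketch_space (rounds_before m))"
    by simp
  have [measurable]: "(\<lambda>\<phi>. \<phi> (i, k)) \<in> borel_measurable (sketch_space (rounds_before m))" if "i < n" for i
    using Suc.prems that by (intro measurable_sketch_component) auto
  have "iter_of_sketches (Suc k)
      = (\<lambda>\<phi>. iter_of_sketches k \<phi> - (1 / real n) *\<^sub>R (\<Sum>i<n. \<phi> (i, k) *v (D *v gf i (iter_of_sketches k \<phi>))))"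
    by (simp add: iter_of_sketches_def fun_eq_iff)
  also have "\<dots> \<in> borel_measurable (sketch_space (rounds_before m))"
    by measurable
  finally show ?case .
qed

lemma measurable_sketch_block:
  assumes "A \<subseteq> {..<n} \<times> UNIV"
  shows "sketch_block A \<in> measurable M (sketch_space A)"
  unfolding sketch_block_def
proof (rule measurable_restrict)
  fix p assume "p \<in> A"
  then show "(\<lambda>\<omega>. T (fst p) (snd p) \<omega>) \<in> borel_measurable M"
    using assms T_measurable by auto
qed

lemma borel_measurable_iterate[measurable]: "iterate k \<in> borel_measurable M"
proof -
  have "(\<lambda>\<omega>. iter_of_sketches k (sketch_block (rounds_before k) \<omega>)) \<in> borel_measurable M"
    by (rule measurable_compose[OF measurable_sketch_block measurable_iter_of_sketches]) auto
  then show ?thesis by (simp add: iterate_eq_iter_of_sketches[abs_def])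
qed

lemma indep_sketch_blocks:
  assumes "A \<inter> B = {}" "A \<subseteq> {..<n} \<times> UNIV" "B \<subseteq> {..<n} \<times> UNIV"
  shows "indep_var (sketch_space A) (sketch_block A) (sketch_space B) (sketch_block B)"
proof -
  have "indep_vars (\<lambda>j. sketch_space (case_bool A B j))
      (\<lambda>j \<omega>. restrict (\<lambda>i. (\<lambda>(i, k). T i k) i \<omega>) (case_bool A B j)) UNIV"
    by (rule indep_vars_restrict[OF T_indep])
      (use assms in \<open>auto simp: disjoint_family_on_def split: bool.split\<close>)
  moreover have "(\<lambda>j. sketch_space (case_bool A B j)) = case_bool (sketch_space A) (sketch_space B)"
    by (rule ext) (simp split: bool.split)
  moreover have "(\<lambda>j \<omega>. restrict (\<lambda>i. (\<lambda>(i, k). T i k) i \<omega>) (case_bool A B j))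
      = case_bool (sketch_block A) (sketch_block B)"
    by (intro ext) (simp add: sketch_block_def case_prod_beta split: bool.split)
  ultimately show ?thesis unfolding indep_var_def by metis
qed

lemma indep_iterate_round:
  assumes "\<phi> \<in> borel_measurable borel" "\<psi> \<in> borel_measurable (sketch_space (round_at k))"
  shows "indep_var borel (\<lambda>\<omega>. \<phi> (iterate k \<omega>)) borel (\<lambda>\<omega>. \<psi> (sketch_block (round_at k) \<omega>))"
proof -
  have "indep_var (sketch_space (rounds_before k)) (sketch_block (rounds_before k))
      (sketch_space (round_at k)) (sketch_block (round_at k))"
    by (rule indep_sketch_blocks) auto
  moreover have "(\<lambda>p. \<phi> (iter_of_sketches k p)) \<in> borel_measurable (sketch_space (rounds_before k))"
    using measurable_compose[OF measurable_iter_of_sketches[of k k] assms(1)] by simp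
  ultimately have "indep_var borel ((\<lambda>p. \<phi> (iter_of_sketches k p)) \<circ> sketch_block (rounds_before k))
      borel (\<psi> \<circ> sketch_block (round_at k))"
    by (rule indep_var_compose) (rule assms(2))
  then show ?thesis by (simp add: o_def iterate_eq_iter_of_sketches)
qed

lemma indep_sketch_entries:
  assumes "i < n" "j < n" "i \<noteq> j"
  shows "indep_var borel (\<lambda>\<omega>. T i k \<omega> $ p $ q) borel (\<lambda>\<omega>. T j k \<omega> $ r $ s)"
proof -
  have "indep_var (sketch_space {(i, k)}) (sketch_block {(i, k)}) (sketch_space {(j, k)}) (sketch_block {(j, k)})"
    by (rule indep_sketch_blocks) (use assms in auto)
  moreover have "(\<lambda>\<phi>. \<phi> (i, k) $ p $ q) \<in> borel_measurable (sketch_space {(i, k)})"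
    using measurable_sketch_component[of i k "{(i, k)}"] by measurable
  moreover have "(\<lambda>\<phi>. \<phi> (j, k) $ r $ s) \<in> borel_measurable (sketch_space {(j, k)})"
    using measurable_sketch_component[of j k "{(j, k)}"] by measurable
  ultimately have "indep_var borel ((\<lambda>\<phi>. \<phi> (i, k) $ p $ q) \<circ> sketch_block {(i, k)})
      borel ((\<lambda>\<phi>. \<phi> (j, k) $ r $ s) \<circ> sketch_block {(j, k)})"
    by (rule indep_var_compose)
  then show ?thesis by (simp add: o_def sketch_block_def)
qed

text \<open>Since \<open>x\<^sup>k\<close> depends only on the sketches of earlier rounds, a bilinear form in functions of
  \<open>x\<^sup>k\<close> whose matrix depends only on the sketches of round \<open>k\<close> has the expectation obtained by
  averaging the matrix first.\<close>

lemma integral_bilinear_round: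
  fixes u v :: "real^'d \<Rightarrow> real^'d" and \<Xi> :: "(nat \<times> nat \<Rightarrow> real^'d^'d) \<Rightarrow> real^'d^'d"
  assumes [measurable]: "u \<in> borel_measurable borel" "v \<in> borel_measurable borel"
    and uv: "\<And>p q. integrable M (\<lambda>\<omega>. u (iterate k \<omega>) $ p * v (iterate k \<omega>) $ q)"
    and [measurable]: "\<Xi> \<in> borel_measurable (sketch_space (round_at k))"
    and \<Xi>_int: "\<And>p q. integrable M (\<lambda>\<omega>. \<Xi> (sketch_block (round_at k) \<omega>) $ p $ q)"
    and mean: "\<And>p q. (\<integral>\<omega>. \<Xi> (sketch_block (round_at k) \<omega>) $ p $ q \<partial>M) = E $ p $ q"
  shows "integrable M (\<lambda>\<omega>. u (iterate k \<omega>) \<bullet> (\<Xi> (sketch_block (round_at k) \<omega>) *v v (iterate k \<omega>)))"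
    and "(\<integral>\<omega>. u (iterate k \<omega>) \<bullet> (\<Xi> (sketch_block (round_at k) \<omega>) *v v (iterate k \<omega>)) \<partial>M)
       = (\<integral>\<omega>. u (iterate k \<omega>) \<bullet> (E *v v (iterate k \<omega>)) \<partial>M)"
proof -
  let ?uv = "\<lambda>p q \<omega>. u (iterate k \<omega>) $ p * v (iterate k \<omega>) $ q"
  let ?\<Xi> = "\<lambda>p q \<omega>. \<Xi> (sketch_block (round_at k) \<omega>) $ p $ q"
  have ind: "indep_var borel (?uv p q) borel (?\<Xi> p q)" for p q
    by (rule indep_iterate_round[where \<phi> = "\<lambda>y. u y $ p * v y $ q" and \<psi> = "\<lambda>\<phi>. \<Xi> \<phi> $ p $ q"]) measurable
  have int: "integrable M (\<lambda>\<omega>. ?uv p q \<omega> * ?\<Xi> p q \<omega>)" for p q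
    by (rule indep_var_integrable[OF ind uv \<Xi>_int])
  show "integrable M (\<lambda>\<omega>. u (iterate k \<omega>) \<bullet> (\<Xi> (sketch_block (round_at k) \<omega>) *v v (iterate k \<omega>)))"
    unfolding inner_matrix_vector_entries by (intro Bochner_Integration.integrable_sum int)
  have "(\<integral>\<omega>. u (iterate k \<omega>) \<bullet> (\<Xi> (sketch_block (round_at k) \<omega>) *v v (iterate k \<omega>)) \<partial>M)
      = (\<Sum>p\<in>UNIV. \<Sum>q\<in>UNIV. (\<integral>\<omega>. ?uv p q \<omega> * ?\<Xi> p q \<omega> \<partial>M))"
    unfolding inner_matrix_vector_entries using int by (simp add: Bochner_Integration.integral_sum)
  also have "\<dots> = (\<Sum>p\<in>UNIV. \<Sum>q\<in>UNIV. (\<integral>\<omega>. ?uv p q \<omega> * E $ p $ q \<partial>M))"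
    using indep_var_lebesgue_integral[OF ind uv \<Xi>_int] by (simp add: mean)
  also have "\<dots> = (\<integral>\<omega>. u (iterate k \<omega>) \<bullet> (E *v v (iterate k \<omega>)) \<partial>M)"
    unfolding inner_matrix_vector_entries using uv by (simp add: Bochner_Integration.integral_sum)
  finally show "(\<integral>\<omega>. u (iterate k \<omega>) \<bullet> (\<Xi> (sketch_block (round_at k) \<omega>) *v v (iterate k \<omega>)) \<partial>M)
       = (\<integral>\<omega>. u (iterate k \<omega>) \<bullet> (E *v v (iterate k \<omega>)) \<partial>M)" .
qed

end

section \<open>The method in expectation\<close>

locale distributed_det_cgd = sketched_iteration M n gf T D x0
  for M :: "'a measure" and n :: nat and gf :: "nat \<Rightarrow> real^'d \<Rightarrow> real^'d"
    and T :: "nat \<Rightarrow> nat \<Rightarrow> 'a \<Rightarrow> real^'d^'d" and D :: "real^'d^'d" and x0 :: "real^'d" +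
  fixes fs :: "nat \<Rightarrow> real^'d \<Rightarrow> real" and finf_i :: "nat \<Rightarrow> real" and finf :: real
    and Ls :: "nat \<Rightarrow> real^'d^'d" and L :: "real^'d^'d" and Tdist :: "(real^'d^'d) measure"
  assumes n_pos: "n \<ge> 1"
    and lower_i: "\<And>i y. i < n \<Longrightarrow> finf_i i \<le> fs i y"
    and smooth_i: "\<And>i. i < n \<Longrightarrow> pd (Ls i) \<and> matrix_smooth (Ls i) (fs i) (gf i)"
    and lower: "\<And>y. finf \<le> (1 / real n) * (\<Sum>i<n. fs i y)"
    and L_psd: "psd L"
    and smooth: "matrix_smooth L (\<lambda>x. (1 / real n) * (\<Sum>i<n. fs i x)) (\<lambda>x. (1 / real n) *\<^sub>R (\<Sum>i<n. gf i x))"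
    and T_dist: "\<And>i k. i < n \<Longrightarrow> distr M borel (T i k) = Tdist"
    and T_psd: "\<And>i k. i < n \<Longrightarrow> AE \<omega> in M. psd (T i k \<omega>)"
    and T_int: "\<And>i k. i < n \<Longrightarrow> integrable M (T i k)"
    and T_mean: "\<And>i k. i < n \<Longrightarrow> integral\<^sup>L M (T i k) = mat 1"
    and noise_int: "\<And>i k. i < n \<Longrightarrow> integrable M (\<lambda>\<omega>.
               msqrt (Ls i) ** D ** (T i k \<omega> - mat 1) ** L ** (T i k \<omega> - mat 1) ** D ** msqrt (Ls i))"
    and fs_int: "\<And>i k. i < n \<Longrightarrow> integrable M (\<lambda>\<omega>. fs i (iter n gf T D x0 k \<omega>))"
    and D_pd: "pd D"
    and DLD: "loewner_le (D ** L ** D) D"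
begin

definition favg :: "real^'d \<Rightarrow> real" where
  "favg y = (1 / real n) * (\<Sum>i<n. fs i y)"

definition gavg :: "real^'d \<Rightarrow> real^'d" where
  "gavg y = (1 / real n) *\<^sub>R (\<Sum>i<n. gf i y)"

definition sketch_noise :: "real^'d^'d" where
  "sketch_noise = integral\<^sup>L Tdist (\<lambda>t. (t - mat 1) ** L ** (t - mat 1))"

lemma sym_D: "sym_mat D"
  using D_pd by (simp add: pd_def)

lemma sym_L: "sym_mat L"
  using L_psd by (simp add: psd_def)

lemma sym_sketch_AE: "i < n \<Longrightarrow> AE \<omega> in M. transpose (T i k \<omega>) = T i k \<omega>"
  using T_psd[of i k] by (auto simp: psd_def sym_mat_def)

lemma square_integrable_gradient:
  assumes i: "i < n"
  shows "square_integrable M (\<lambda>\<omega>. gf i (iterate k \<omega>))"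
  unfolding square_integrable_def
proof
  show meas: "(\<lambda>\<omega>. gf i (iterate k \<omega>)) \<in> borel_measurable M" using i by measurable
  define C where "C = 2 * (onorm ((*v) (msqrt (Ls i))))^2"
  have bound: "(norm (gf i y))^2 \<le> C * (fs i y - finf_i i)" for y
    unfolding C_def using smooth_i[OF i] lower_i[OF i] by (intro matrix_smooth_gradient_norm_bound) auto
  show "integrable M (\<lambda>\<omega>. (norm (gf i (iterate k \<omega>)))^2)"
  proof (rule Bochner_Integration.integrable_bound)
    show "integrable M (\<lambda>\<omega>. C * (fs i (iterate k \<omega>) - finf_i i))"
      using fs_int[OF i, of k] by simp
    show "(\<lambda>\<omega>. (norm (gf i (iterate k \<omega>)))^2) \<in> borel_measurable M" using meas by measurable
    show "AE \<omega> in M. norm ((norm (gf i (iterate k \<omega>)))^2) \<le> norm (C * (fs i (iterate k \<omega>) - finf_i i))"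
      using bound by (intro AE_I2) (simp add: order_trans[OF _ abs_ge_self])
  qed
qed

lemma integrable_gradient_components:
  fixes A B :: "real^'d^'d"
  assumes "i < n" "j < n"
  shows "integrable M (\<lambda>\<omega>. (A *v gf i (iterate k \<omega>)) $ p * (B *v gf j (iterate k \<omega>)) $ q)"
  by (intro integrable_component_product square_integrable_matrix_vector_mult square_integrable_gradient assms)

text \<open>The hypothesis only controls the sandwiched matrix, but \<open>L\<^sub>i\<^sup>1\<^sup>/\<^sup>2 D\<close> is invertible.\<close>

lemma integrable_sketch_noise_sample:
  assumes i: "i < n"
  shows "integrable M (\<lambda>\<omega>. (T i k \<omega> - mat 1) ** L ** (T i k \<omega> - mat 1))"
proof -
  have inv: "invertible (msqrt (Ls i))" "invertible D"
    using surj_msqrt[of "Ls i"] surj_pd[OF D_pd] smooth_i[OF i] by (simp_all add: invertible_iff_surj)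
  have "integrable M (\<lambda>\<omega>. (msqrt (Ls i) ** D) ** ((T i k \<omega> - mat 1) ** L ** (T i k \<omega> - mat 1)) ** (D ** msqrt (Ls i)))"
    using noise_int[OF i, of k] by (simp only: matrix_mul_assoc)
  then show ?thesis
    by (rule integrable_cancel_invertible_sandwich[rotated 2]) (simp_all add: inv invertible_mult)
qed

lemma integral_sketch_noise_sample:
  assumes i: "i < n"
  shows "(\<integral>\<omega>. (T i k \<omega> - mat 1) ** L ** (T i k \<omega> - mat 1) \<partial>M) = sketch_noise"
proof -
  have "(\<lambda>t. (t - mat 1) ** L ** (t - mat 1)) \<in> borel_measurable borel" by measurable
  from integral_distr[OF T_measurable[OF i, of k] this] show ?thesis
    using T_dist[OF i, of k] by (simp add: sketch_noise_def)
qed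

lemma sketch_L_sketch:
  assumes i: "i < n"
  shows "integrable M (\<lambda>\<omega>. transpose (T i k \<omega>) ** L ** T i k \<omega>)"
    and "(\<integral>\<omega>. transpose (T i k \<omega>) ** L ** T i k \<omega> \<partial>M) = L + sketch_noise"
proof -
  let ?Z = "\<lambda>\<omega>. (T i k \<omega> - mat 1) ** L ** (T i k \<omega> - mat 1)"
  let ?R = "\<lambda>\<omega>. ?Z \<omega> + mat 1 ** T i k \<omega> ** L + L ** T i k \<omega> ** mat 1 - L"
  have ae: "AE \<omega> in M. transpose (T i k \<omega>) ** L ** T i k \<omega> = ?R \<omega>"
    using sym_sketch_AE[of i k, OF i] by eventually_elim (simp add: matrix_diff_id_sandwich)
  have Z: "integrable M ?Z" by (rule integrable_sketch_noise_sample[OF i])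
  have TL: "integrable M (\<lambda>\<omega>. mat 1 ** T i k \<omega> ** L)" "integrable M (\<lambda>\<omega>. L ** T i k \<omega> ** mat 1)"
    by (intro integrable_bounded_linear[OF bounded_linear_matrix_sandwich T_int[OF i]])+
  then have R: "integrable M ?R" using Z by simp
  have meas: "(\<lambda>\<omega>. transpose (T i k \<omega>) ** L ** T i k \<omega>) \<in> borel_measurable M"
    using T_measurable[OF i] by measurable
  show "integrable M (\<lambda>\<omega>. transpose (T i k \<omega>) ** L ** T i k \<omega>)"
    using integrable_cong_AE_imp[OF R meas] ae by (simp add: eq_commute)
  have "(\<integral>\<omega>. transpose (T i k \<omega>) ** L ** T i k \<omega> \<partial>M) = (\<integral>\<omega>. ?R \<omega> \<partial>M)"
    using meas R ae by (intro integral_cong_AE) auto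
  also have "\<dots> = sketch_noise + mat 1 ** (\<integral>\<omega>. T i k \<omega> \<partial>M) ** L + L ** (\<integral>\<omega>. T i k \<omega> \<partial>M) ** mat 1 - L"
    using Z TL integral_sketch_noise_sample[OF i, of k] prob_space
      integral_bounded_linear[OF bounded_linear_matrix_sandwich[of "mat 1" L] T_int[OF i, of k]]
      integral_bounded_linear[OF bounded_linear_matrix_sandwich[of L "mat 1"] T_int[OF i, of k]]
    by simp
  also have "\<dots> = L + sketch_noise" using T_mean[OF i] by simp
  finally show "(\<integral>\<omega>. transpose (T i k \<omega>) ** L ** T i k \<omega> \<partial>M) = L + sketch_noise" .
qed

lemma sketch_entries:
  assumes i: "i < n"
  shows "integrable M (\<lambda>\<omega>. T i k \<omega> $ p $ q)" "(\<integral>\<omega>. T i k \<omega> $ p $ q \<partial>M) = mat 1 $ p $ q"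
  using integrable_matrix_entry[OF T_int[OF i]] integral_matrix_entry[OF T_int[OF i]] T_mean[OF i]
  by auto

lemma sketch_L_sketch_entries:
  assumes i: "i < n" and j: "j < n"
  shows "integrable M (\<lambda>\<omega>. (transpose (T i k \<omega>) ** L ** T j k \<omega>) $ p $ s)"
    and "(\<integral>\<omega>. (transpose (T i k \<omega>) ** L ** T j k \<omega>) $ p $ s \<partial>M) = (if i = j then L + sketch_noise else L) $ p $ s"
proof -
  have "integrable M (\<lambda>\<omega>. (transpose (T i k \<omega>) ** L ** T j k \<omega>) $ p $ s) \<and>
    (\<integral>\<omega>. (transpose (T i k \<omega>) ** L ** T j k \<omega>) $ p $ s \<partial>M) = (if i = j then L + sketch_noise else L) $ p $ s"
  proof (cases "i = j")
    case True
    then show ?thesis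
      using integrable_matrix_entry[OF sketch_L_sketch(1)[OF i]] integral_matrix_entry[OF sketch_L_sketch(1)[OF i]]
        sketch_L_sketch(2)[OF i] by auto
  next
    case False
    note ind = indep_sketch_entries[OF i j False]
    note int = indep_var_integrable[OF ind sketch_entries(1)[OF i] sketch_entries(1)[OF j]]
    have "(\<integral>\<omega>. (transpose (T i k \<omega>) ** L ** T j k \<omega>) $ p $ s \<partial>M)
        = (\<Sum>r\<in>UNIV. \<Sum>q\<in>UNIV. L $ q $ r * ((\<integral>\<omega>. T i k \<omega> $ q $ p \<partial>M) * (\<integral>\<omega>. T j k \<omega> $ r $ s \<partial>M)))"
      unfolding transpose_mult_mult_entry
      using int indep_var_lebesgue_integral[OF ind sketch_entries(1)[OF i] sketch_entries(1)[OF j]]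
      by (simp add: Bochner_Integration.integral_sum)
    also have "\<dots> = (\<Sum>r\<in>UNIV. \<Sum>q\<in>UNIV. if q = p then (if r = s then L $ q $ r else 0) else 0)"
      by (intro sum.cong refl) (simp add: sketch_entries(2)[OF i] sketch_entries(2)[OF j] mat_def)
    also have "\<dots> = L $ p $ s" by simp
    finally have "(\<integral>\<omega>. (transpose (T i k \<omega>) ** L ** T j k \<omega>) $ p $ s \<partial>M) = L $ p $ s" .
    moreover have "integrable M (\<lambda>\<omega>. (transpose (T i k \<omega>) ** L ** T j k \<omega>) $ p $ s)"
      unfolding transpose_mult_mult_entry
      by (intro Bochner_Integration.integrable_sum integrable_mult_right int)
    ultimately show ?thesis using False by simp
  qed
  then show "integrable M (\<lambda>\<omega>. (transpose (T i k \<omega>) ** L ** T j k \<omega>) $ p $ s)"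
    and "(\<integral>\<omega>. (transpose (T i k \<omega>) ** L ** T j k \<omega>) $ p $ s \<partial>M) = (if i = j then L + sketch_noise else L) $ p $ s"
    by auto
qed

lemma integral_gradient_sketch:
  assumes i: "i < n" and j: "j < n"
  shows "integrable M (\<lambda>\<omega>. gf j (iterate k \<omega>) \<bullet> (T i k \<omega> *v (D *v gf i (iterate k \<omega>))))"
    and "(\<integral>\<omega>. gf j (iterate k \<omega>) \<bullet> (T i k \<omega> *v (D *v gf i (iterate k \<omega>))) \<partial>M)
       = (\<integral>\<omega>. gf j (iterate k \<omega>) \<bullet> (D *v gf i (iterate k \<omega>)) \<partial>M)"
proof -
  have "integrable M (\<lambda>\<omega>. gf j (iterate k \<omega>) $ p * (D *v gf i (iterate k \<omega>)) $ q)" for p q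
    using integrable_gradient_components[OF j i, of "mat 1" k p D q] by simp
  note factor = integral_bilinear_round[where \<Xi> = "\<lambda>\<phi>. \<phi> (i, k)" and E = "mat 1", OF _ _ this]
  show "integrable M (\<lambda>\<omega>. gf j (iterate k \<omega>) \<bullet> (T i k \<omega> *v (D *v gf i (iterate k \<omega>))))"
    and "(\<integral>\<omega>. gf j (iterate k \<omega>) \<bullet> (T i k \<omega> *v (D *v gf i (iterate k \<omega>))) \<partial>M)
       = (\<integral>\<omega>. gf j (iterate k \<omega>) \<bullet> (D *v gf i (iterate k \<omega>)) \<partial>M)"
    using factor i j measurable_sketch_component[of i k "round_at k"] sketch_entries[OF i]
    by (simp_all add: sketch_block_round_at)
qed

lemma integral_gradient_sketch_L_sketch:
  assumes i: "i < n" and j: "j < n"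
  shows "integrable M (\<lambda>\<omega>. (D *v gf i (iterate k \<omega>)) \<bullet> ((transpose (T i k \<omega>) ** L ** T j k \<omega>) *v (D *v gf j (iterate k \<omega>))))"
    and "(\<integral>\<omega>. (D *v gf i (iterate k \<omega>)) \<bullet> ((transpose (T i k \<omega>) ** L ** T j k \<omega>) *v (D *v gf j (iterate k \<omega>))) \<partial>M)
       = (\<integral>\<omega>. (D *v gf i (iterate k \<omega>)) \<bullet> ((if i = j then L + sketch_noise else L) *v (D *v gf j (iterate k \<omega>))) \<partial>M)"
proof -
  have "integrable M (\<lambda>\<omega>. (D *v gf i (iterate k \<omega>)) $ p * (D *v gf j (iterate k \<omega>)) $ q)" for p q
    by (rule integrable_gradient_components[OF i j])
  note factor = integral_bilinear_round[where \<Xi> = "\<lambda>\<phi>. transpose (\<phi> (i, k)) ** L ** \<phi> (j, k)"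
      and E = "if i = j then L + sketch_noise else L", OF _ _ this]
  have "(\<lambda>\<phi>. transpose (\<phi> (i, k)) ** L ** \<phi> (j, k)) \<in> borel_measurable (sketch_space (round_at k))"
    using i j
    by (intro borel_measurable_matrix_mult borel_measurable_transpose borel_measurable_const
        measurable_sketch_component) auto
  then show "integrable M (\<lambda>\<omega>. (D *v gf i (iterate k \<omega>)) \<bullet> ((transpose (T i k \<omega>) ** L ** T j k \<omega>) *v (D *v gf j (iterate k \<omega>))))"
    and "(\<integral>\<omega>. (D *v gf i (iterate k \<omega>)) \<bullet> ((transpose (T i k \<omega>) ** L ** T j k \<omega>) *v (D *v gf j (iterate k \<omega>))) \<partial>M)
       = (\<integral>\<omega>. (D *v gf i (iterate k \<omega>)) \<bullet> ((if i = j then L + sketch_noise else L) *v (D *v gf j (iterate k \<omega>))) \<partial>M)"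
    using factor i j sketch_L_sketch_entries[OF i j] by (simp_all add: sketch_block_round_at)
qed

lemma real_n_pos: "real n > 0"
  using n_pos by simp

lemma favg_smooth_step: "favg (y - G) \<le> favg y - gavg y \<bullet> G + 1/2 * ((L *v G) \<bullet> G)"
proof -
  have "favg (y - G) \<le> favg y + gavg y \<bullet> ((y - G) - y) + 1/2 * ((L *v ((y - G) - y)) \<bullet> ((y - G) - y))"
    using smooth unfolding matrix_smooth_def favg_def[abs_def] gavg_def[abs_def] by blast
  moreover have "(y - G) - y = (-1) *\<^sub>R G" by simp
  ultimately show ?thesis by (simp only: matrix_vector_mult_scaleR) simp
qed

lemma inner_gavg_sketched_step:
  "gavg y \<bullet> ((1 / real n) *\<^sub>R (\<Sum>i<n. Ts i *v (D *v gf i y)))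
    = (1 / real n)^2 * (\<Sum>j<n. \<Sum>i<n. gf j y \<bullet> (Ts i *v (D *v gf i y)))"
  unfolding gavg_def inner_scaleR_left inner_scaleR_right inner_sum_sum
  by (simp add: power2_eq_square sum_distrib_left)

lemma quadratic_form_sketched_step:
  "(L *v ((1 / real n) *\<^sub>R (\<Sum>i<n. Ts i *v (D *v gf i y)))) \<bullet> ((1 / real n) *\<^sub>R (\<Sum>i<n. Ts i *v (D *v gf i y)))
    = (1 / real n)^2 * (\<Sum>i<n. \<Sum>j<n. (D *v gf i y) \<bullet> ((transpose (Ts i) ** L ** Ts j) *v (D *v gf j y)))"
proof -
  have "(Ts i *v u) \<bullet> (L *v (Ts j *v v)) = u \<bullet> ((transpose (Ts i) ** L ** Ts j) *v v)" for i j u v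
    by (simp add: inner_matrix_vector_transpose matrix_vector_mul_assoc matrix_mul_assoc)
  then show ?thesis
    using sym_mat_inner[OF sym_L]
    by (simp add: matrix_vector_mult_scaleR matrix_vector_mult_sum_right inner_sum_left inner_sum_right
        power2_eq_square sum_distrib_left inner_commute[of "L *v _"])
qed

lemma inner_gavg_D_gavg:
  "gavg y \<bullet> (D *v gavg y) = (1 / real n)^2 * (\<Sum>j<n. \<Sum>i<n. gf j y \<bullet> (D *v gf i y))"
  unfolding gavg_def matrix_vector_mult_scaleR matrix_vector_mult_sum_right inner_scaleR_left
    inner_scaleR_right inner_sum_sum
  by (simp add: power2_eq_square sum_distrib_left)

lemma sum_gradient_mean_forms:
  "(\<Sum>i<n. \<Sum>j<n. (D *v gf i y) \<bullet> ((if i = j then L + Z else L) *v (D *v gf j y)))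
    = real n ^ 2 * ((D *v gavg y) \<bullet> (L *v (D *v gavg y))) + (\<Sum>i<n. (D *v gf i y) \<bullet> (Z *v (D *v gf i y)))"
proof -
  have "(\<Sum>i<n. \<Sum>j<n. (D *v gf i y) \<bullet> ((if i = j then L + Z else L) *v (D *v gf j y)))
      = (\<Sum>i<n. \<Sum>j<n. (D *v gf i y) \<bullet> (L *v (D *v gf j y))) + (\<Sum>i<n. (D *v gf i y) \<bullet> (Z *v (D *v gf i y)))"
  proof -
    have "(D *v gf i y) \<bullet> ((if i = j then L + Z else L) *v (D *v gf j y))
        = (D *v gf i y) \<bullet> (L *v (D *v gf j y)) + (if i = j then (D *v gf i y) \<bullet> (Z *v (D *v gf j y)) else 0)"
      for i j by (simp add: matrix_vector_mult_add_rdistrib inner_add_right)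
    then show ?thesis by (simp add: sum.distrib)
  qed
  moreover have "(D *v gavg y) \<bullet> (L *v (D *v gavg y))
      = (1 / real n)^2 * (\<Sum>i<n. \<Sum>j<n. (D *v gf i y) \<bullet> (L *v (D *v gf j y)))"
    unfolding gavg_def matrix_vector_mult_scaleR matrix_vector_mult_sum_right inner_scaleR_left
      inner_scaleR_right inner_sum_sum
    by (simp add: power2_eq_square sum_distrib_left)
  ultimately show ?thesis using real_n_pos by (simp add: power2_eq_square)
qed

lemma psd_sketch_noise: "psd sketch_noise"
proof -
  have n: "0 < n" using n_pos by simp
  have "AE \<omega> in M. psd ((T 0 0 \<omega> - mat 1) ** L ** (T 0 0 \<omega> - mat 1))"
    using sym_sketch_AE[of 0 0, OF n]
  proof eventually_elim
    case (elim \<omega>)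
    then show ?case using psd_congruence[OF L_psd, of "T 0 0 \<omega> - mat 1"] by (simp add: transpose_diff_mat_1)
  qed
  then show ?thesis
    using psd_integral[OF integrable_sketch_noise_sample[OF n]] integral_sketch_noise_sample[OF n] by simp
qed

definition noise_matrix :: "nat \<Rightarrow> real^'d^'d" where
  "noise_matrix i = integral\<^sup>L M (\<lambda>\<omega>.
     msqrt (Ls i) ** D ** (T i 0 \<omega> - mat 1) ** L ** (T i 0 \<omega> - mat 1) ** D ** msqrt (Ls i))"

definition lambda_D :: real where
  "lambda_D = Max ((\<lambda>i. lambda_max (noise_matrix i)) ` {..<n})"

lemma noise_matrix_eq:
  assumes i: "i < n"
  shows "noise_matrix i = transpose (D ** msqrt (Ls i)) ** sketch_noise ** (D ** msqrt (Ls i))"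
proof -
  let ?S = "msqrt (Ls i)"
  have sym: "transpose ?S = ?S" "transpose D = D"
    using psd_msqrt[OF pd_imp_psd] smooth_i[OF i] sym_D by (auto simp: psd_def sym_mat_def)
  have "noise_matrix i
      = integral\<^sup>L M (\<lambda>\<omega>. (?S ** D) ** ((T i 0 \<omega> - mat 1) ** L ** (T i 0 \<omega> - mat 1)) ** (D ** ?S))"
    unfolding noise_matrix_def by (simp only: matrix_mul_assoc)
  also have "\<dots> = (?S ** D) ** sketch_noise ** (D ** ?S)"
    using integral_bounded_linear[OF bounded_linear_matrix_sandwich integrable_sketch_noise_sample[OF i, of 0]]
      integral_sketch_noise_sample[OF i, of 0] by simp
  finally show ?thesis by (simp add: matrix_transpose_mul sym)
qed

lemma psd_noise_matrix: "i < n \<Longrightarrow> psd (noise_matrix i)"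
  using psd_congruence[OF psd_sketch_noise] by (simp add: noise_matrix_eq)

lemma lambda_max_noise_matrix_le: "i < n \<Longrightarrow> lambda_max (noise_matrix i) \<le> lambda_D"
  unfolding lambda_D_def by (intro Max_ge) auto

lemma lambda_D_nonneg: "0 \<le> lambda_D"
proof -
  have n: "0 < n" using n_pos by simp
  show ?thesis
    using lambda_max_nonneg[OF psd_noise_matrix[OF n]] lambda_max_noise_matrix_le[OF n] by linarith
qed

lemma quadratic_form_sketch_noise_le:
  assumes i: "i < n"
  shows "(D *v gf i y) \<bullet> (sketch_noise *v (D *v gf i y)) \<le> 2 * lambda_D * (fs i y - finf_i i)"
proof -
  obtain h where h: "gf i y = msqrt (Ls i) *v h" "h \<bullet> h \<le> 2 * (fs i y - finf_i i)"
    using matrix_smooth_gradient_bound smooth_i[OF i] lower_i[OF i] by metis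
  have "(D *v gf i y) \<bullet> (sketch_noise *v (D *v gf i y)) = h \<bullet> (noise_matrix i *v h)"
    unfolding noise_matrix_eq[OF i] h(1)
    by (simp add: inner_matrix_vector_transpose matrix_vector_mul_assoc matrix_mul_assoc inner_commute)
  also have "\<dots> \<le> lambda_max (noise_matrix i) * (h \<bullet> h)"
    using psd_noise_matrix[OF i] by (intro quadratic_form_le_lambda_max) (simp add: psd_def)
  also have "\<dots> \<le> lambda_D * (2 * (fs i y - finf_i i))"
    using lambda_max_noise_matrix_le[OF i] lambda_D_nonneg h(2)
    by (intro mult_mono) auto
  finally show ?thesis by (simp add: algebra_simps)
qed

definition first_order_term :: "nat \<Rightarrow> 'a \<Rightarrow> real" where
  "first_order_term k \<omega> = (\<Sum>j<n. \<Sum>i<n. gf j (iterate k \<omega>) \<bullet> (T i k \<omega> *v (D *v gf i (iterate k \<omega>))))"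

definition second_order_term :: "nat \<Rightarrow> 'a \<Rightarrow> real" where
  "second_order_term k \<omega> = (\<Sum>i<n. \<Sum>j<n.
     (D *v gf i (iterate k \<omega>)) \<bullet> ((transpose (T i k \<omega>) ** L ** T j k \<omega>) *v (D *v gf j (iterate k \<omega>))))"

definition second_order_mean :: "real^'d \<Rightarrow> real" where
  "second_order_mean y = (\<Sum>i<n. \<Sum>j<n.
     (D *v gf i y) \<bullet> ((if i = j then L + sketch_noise else L) *v (D *v gf j y)))"

lemma favg_iterate_Suc_le:
  "favg (iterate (Suc k) \<omega>) \<le> favg (iterate k \<omega>) - (1 / real n)^2 * first_order_term k \<omega>
     + (1 / real n)^2 / 2 * second_order_term k \<omega>"
proof -
  let ?G = "(1 / real n) *\<^sub>R (\<Sum>i<n. T i k \<omega> *v (D *v gf i (iterate k \<omega>)))"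
  have "favg (iterate (Suc k) \<omega>) \<le> favg (iterate k \<omega>) - gavg (iterate k \<omega>) \<bullet> ?G + 1/2 * ((L *v ?G) \<bullet> ?G)"
    unfolding iterate_Suc by (rule favg_smooth_step)
  also have "\<dots> = favg (iterate k \<omega>) - (1 / real n)^2 * first_order_term k \<omega>
     + (1 / real n)^2 / 2 * second_order_term k \<omega>"
    unfolding inner_gavg_sketched_step quadratic_form_sketched_step first_order_term_def second_order_term_def
    by simp
  finally show ?thesis .
qed

lemma integral_first_order_term:
  shows "integrable M (first_order_term k)"
    and "integrable M (\<lambda>\<omega>. gavg (iterate k \<omega>) \<bullet> (D *v gavg (iterate k \<omega>)))"
    and "integral\<^sup>L M (first_order_term k) = real n ^ 2 * (\<integral>\<omega>. gavg (iterate k \<omega>) \<bullet> (D *v gavg (iterate k \<omega>)) \<partial>M)"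
proof -
  let ?t = "\<lambda>j i \<omega>. gf j (iterate k \<omega>) \<bullet> (T i k \<omega> *v (D *v gf i (iterate k \<omega>)))"
  let ?s = "\<lambda>j i \<omega>. gf j (iterate k \<omega>) \<bullet> (D *v gf i (iterate k \<omega>))"
  have t: "integrable M (?t j i)" "integral\<^sup>L M (?t j i) = integral\<^sup>L M (?s j i)" if "j < n" "i < n" for j i
    using integral_gradient_sketch[OF that(2,1)] by auto
  have s: "integrable M (?s j i)" if "j < n" "i < n" for j i
    using that by (intro integrable_inner_matrix_vector square_integrable_gradient)
  have s_sum: "(\<Sum>j<n. \<Sum>i<n. ?s j i \<omega>) = real n ^ 2 * (gavg (iterate k \<omega>) \<bullet> (D *v gavg (iterate k \<omega>)))" for \<omega>
    using real_n_pos by (simp add: inner_gavg_D_gavg power2_eq_square)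
  show "integrable M (first_order_term k)"
    unfolding first_order_term_def[abs_def] by (rule integral_double_sum(1)) (rule t)
  have "integrable M (\<lambda>\<omega>. (1 / real n)^2 * (\<Sum>j<n. \<Sum>i<n. ?s j i \<omega>))"
    by (intro integrable_mult_right integral_double_sum(1)) (rule s)
  then show "integrable M (\<lambda>\<omega>. gavg (iterate k \<omega>) \<bullet> (D *v gavg (iterate k \<omega>)))"
    by (simp add: inner_gavg_D_gavg)
  have "integral\<^sup>L M (first_order_term k) = (\<Sum>j<n. \<Sum>i<n. integral\<^sup>L M (?t j i))"
    unfolding first_order_term_def[abs_def] by (rule integral_double_sum(2)) (rule t)
  also have "\<dots> = (\<Sum>j<n. \<Sum>i<n. integral\<^sup>L M (?s j i))"
    by (intro sum.cong refl) (simp add: t(2))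
  also have "\<dots> = (\<integral>\<omega>. (\<Sum>j<n. \<Sum>i<n. ?s j i \<omega>) \<partial>M)"
    by (rule integral_double_sum(2)[symmetric]) (rule s)
  also have "\<dots> = real n ^ 2 * (\<integral>\<omega>. gavg (iterate k \<omega>) \<bullet> (D *v gavg (iterate k \<omega>)) \<partial>M)"
    unfolding s_sum by simp
  finally show "integral\<^sup>L M (first_order_term k)
      = real n ^ 2 * (\<integral>\<omega>. gavg (iterate k \<omega>) \<bullet> (D *v gavg (iterate k \<omega>)) \<partial>M)" .
qed

lemma integral_second_order_term:
  shows "integrable M (second_order_term k)"
    and "integrable M (\<lambda>\<omega>. second_order_mean (iterate k \<omega>))"
    and "integral\<^sup>L M (second_order_term k) = (\<integral>\<omega>. second_order_mean (iterate k \<omega>) \<partial>M)"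
proof -
  let ?t = "\<lambda>i j \<omega>. (D *v gf i (iterate k \<omega>)) \<bullet> ((transpose (T i k \<omega>) ** L ** T j k \<omega>) *v (D *v gf j (iterate k \<omega>)))"
  let ?s = "\<lambda>i j \<omega>. (D *v gf i (iterate k \<omega>)) \<bullet> ((if i = j then L + sketch_noise else L) *v (D *v gf j (iterate k \<omega>)))"
  have t: "integrable M (?t i j)" "integral\<^sup>L M (?t i j) = integral\<^sup>L M (?s i j)" if "i < n" "j < n" for i j
    using integral_gradient_sketch_L_sketch[OF that] by auto
  have s: "integrable M (?s i j)" if "i < n" "j < n" for i j
    using that by (intro integrable_inner_matrix_vector square_integrable_matrix_vector_mult square_integrable_gradient)
  show "integrable M (second_order_term k)"
    unfolding second_order_term_def[abs_def] by (rule integral_double_sum(1)) (rule t)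
  show "integrable M (\<lambda>\<omega>. second_order_mean (iterate k \<omega>))"
    unfolding second_order_mean_def by (rule integral_double_sum(1)) (rule s)
  have "integral\<^sup>L M (second_order_term k) = (\<Sum>i<n. \<Sum>j<n. integral\<^sup>L M (?t i j))"
    unfolding second_order_term_def[abs_def] by (rule integral_double_sum(2)) (rule t)
  also have "\<dots> = (\<Sum>i<n. \<Sum>j<n. integral\<^sup>L M (?s i j))"
    by (intro sum.cong refl) (simp add: t(2))
  also have "\<dots> = (\<integral>\<omega>. second_order_mean (iterate k \<omega>) \<partial>M)"
    unfolding second_order_mean_def by (rule integral_double_sum(2)[symmetric]) (rule s)
  finally show "integral\<^sup>L M (second_order_term k) = (\<integral>\<omega>. second_order_mean (iterate k \<omega>) \<partial>M)" .
qed

lemma second_order_mean_le: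
  "second_order_mean y \<le> real n ^ 2 * (gavg y \<bullet> (D *v gavg y)) + 2 * lambda_D * (\<Sum>i<n. fs i y - finf_i i)"
proof -
  have "second_order_mean y
      = real n ^ 2 * ((D *v gavg y) \<bullet> (L *v (D *v gavg y))) + (\<Sum>i<n. (D *v gf i y) \<bullet> (sketch_noise *v (D *v gf i y)))"
    unfolding second_order_mean_def by (rule sum_gradient_mean_forms)
  also have "\<dots> \<le> real n ^ 2 * (gavg y \<bullet> (D *v gavg y)) + (\<Sum>i<n. 2 * lambda_D * (fs i y - finf_i i))"
    using quadratic_form_DLD_le[OF sym_D DLD] quadratic_form_sketch_noise_le
    by (intro add_mono mult_left_mono sum_mono) auto
  finally show ?thesis by (simp add: sum_distrib_left)
qed

lemma integral_favg_iterate: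
  shows "integrable M (\<lambda>\<omega>. favg (iterate k \<omega>))"
    and "(\<integral>\<omega>. favg (iterate k \<omega>) \<partial>M) = (1 / real n) * (\<Sum>i<n. \<integral>\<omega>. fs i (iterate k \<omega>) \<partial>M)"
proof -
  show "integrable M (\<lambda>\<omega>. favg (iterate k \<omega>))"
    unfolding favg_def by (intro integrable_mult_right Bochner_Integration.integrable_sum fs_int) auto
  have "(\<integral>\<omega>. favg (iterate k \<omega>) \<partial>M) = (1 / real n) * (\<integral>\<omega>. (\<Sum>i<n. fs i (iterate k \<omega>)) \<partial>M)"
    unfolding favg_def by (rule integral_mult_right_zero)
  also have "\<dots> = (1 / real n) * (\<Sum>i<n. \<integral>\<omega>. fs i (iterate k \<omega>) \<partial>M)"
    using fs_int by (simp add: Bochner_Integration.integral_sum)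
  finally show "(\<integral>\<omega>. favg (iterate k \<omega>) \<partial>M) = (1 / real n) * (\<Sum>i<n. \<integral>\<omega>. fs i (iterate k \<omega>) \<partial>M)" .
qed

lemma integral_second_order_term_le:
  "integral\<^sup>L M (second_order_term k)
    \<le> real n ^ 2 * (\<integral>\<omega>. gavg (iterate k \<omega>) \<bullet> (D *v gavg (iterate k \<omega>)) \<partial>M)
      + 2 * lambda_D * (\<Sum>i<n. (\<integral>\<omega>. fs i (iterate k \<omega>) \<partial>M) - finf_i i)"
proof -
  note first = integral_first_order_term[of k] and second = integral_second_order_term[of k]
  have fs: "integrable M (\<lambda>\<omega>. \<Sum>i<n. fs i (iterate k \<omega>) - finf_i i)"
    using fs_int by auto
  have "integral\<^sup>L M (second_order_term k)
      \<le> (\<integral>\<omega>. real n ^ 2 * (gavg (iterate k \<omega>) \<bullet> (D *v gavg (iterate k \<omega>)))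
           + 2 * lambda_D * (\<Sum>i<n. fs i (iterate k \<omega>) - finf_i i) \<partial>M)"
    unfolding second(3) using second(2) first(2) fs second_order_mean_le by (intro integral_mono) auto
  also have "\<dots> = real n ^ 2 * (\<integral>\<omega>. gavg (iterate k \<omega>) \<bullet> (D *v gavg (iterate k \<omega>)) \<partial>M)
      + 2 * lambda_D * (\<Sum>i<n. (\<integral>\<omega>. fs i (iterate k \<omega>) \<partial>M) - finf_i i)"
    using first(2) fs fs_int by (simp add: Bochner_Integration.integral_sum prob_space)
  finally show ?thesis .
qed

lemma expected_descent:
  "(\<integral>\<omega>. favg (iterate (Suc k) \<omega>) \<partial>M) \<le> (\<integral>\<omega>. favg (iterate k \<omega>) \<partial>M)
     - 1/2 * (\<integral>\<omega>. gavg (iterate k \<omega>) \<bullet> (D *v gavg (iterate k \<omega>)) \<partial>M)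
     + lambda_D / real n ^ 2 * (\<Sum>i<n. (\<integral>\<omega>. fs i (iterate k \<omega>) \<partial>M) - finf_i i)"
proof -
  define c where "c = (1 / real n)^2"
  define G where "G = (\<integral>\<omega>. gavg (iterate k \<omega>) \<bullet> (D *v gavg (iterate k \<omega>)) \<partial>M)"
  define S where "S = (\<Sum>i<n. (\<integral>\<omega>. fs i (iterate k \<omega>) \<partial>M) - finf_i i)"
  note first = integral_first_order_term[of k] and second = integral_second_order_term[of k]
  note favg = integral_favg_iterate(1)
  have "(\<integral>\<omega>. favg (iterate (Suc k) \<omega>) \<partial>M)
      \<le> (\<integral>\<omega>. favg (iterate k \<omega>) - c * first_order_term k \<omega> + c / 2 * second_order_term k \<omega> \<partial>M)"
    unfolding c_def
  proof (rule integral_mono)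
    show "integrable M (\<lambda>\<omega>. favg (iterate (Suc k) \<omega>))" by (rule favg)
    show "integrable M (\<lambda>\<omega>. favg (iterate k \<omega>) - (1 / real n)^2 * first_order_term k \<omega>
        + (1 / real n)^2 / 2 * second_order_term k \<omega>)"
      using favg first(1) second(1) by simp
  qed (rule favg_iterate_Suc_le)
  also have "\<dots> = (\<integral>\<omega>. favg (iterate k \<omega>) \<partial>M) - c * integral\<^sup>L M (first_order_term k)
      + c / 2 * integral\<^sup>L M (second_order_term k)"
    using favg first(1) second(1) by simp
  finally have step: "(\<integral>\<omega>. favg (iterate (Suc k) \<omega>) \<partial>M)
      \<le> (\<integral>\<omega>. favg (iterate k \<omega>) \<partial>M) - c * integral\<^sup>L M (first_order_term k)
        + c / 2 * integral\<^sup>L M (second_order_term k)" .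
  have "c * integral\<^sup>L M (first_order_term k) = G"
    using first(3) real_n_pos by (simp add: c_def G_def power2_eq_square)
  moreover have "c / 2 * integral\<^sup>L M (second_order_term k) \<le> c / 2 * (real n ^ 2 * G + 2 * lambda_D * S)"
    using integral_second_order_term_le[of k] by (intro mult_left_mono) (auto simp: c_def G_def S_def)
  moreover have "c / 2 * (real n ^ 2 * G + 2 * lambda_D * S) = G / 2 + lambda_D / real n ^ 2 * S"
    using real_n_pos by (simp add: c_def field_simps)
  ultimately show ?thesis using step by (simp add: G_def S_def)
qed

lemma min_expected_gradient_norm_le:
  assumes c: "c > 0" and K: "K \<ge> 1"
  shows "Min ((\<lambda>k. \<integral>\<omega>. qnorm2 ((1 / c) *\<^sub>R D) (gavg (iterate k \<omega>)) \<partial>M) ` {..<K})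
    \<le> 2 * (1 + lambda_D / real n) ^ K * (favg x0 - finf) / (c * real K)
      + 2 * lambda_D * (finf - (1 / real n) * (\<Sum>i<n. finf_i i)) / (c * real n)"
proof -
  define \<Delta> where "\<Delta> = finf - (1 / real n) * (\<Sum>i<n. finf_i i)"
  define \<delta> where "\<delta> k = (\<integral>\<omega>. favg (iterate k \<omega>) \<partial>M) - finf" for k
  define r where "r k = (\<integral>\<omega>. qnorm2 ((1 / c) *\<^sub>R D) (gavg (iterate k \<omega>)) \<partial>M)" for k
  have r: "(\<integral>\<omega>. gavg (iterate k \<omega>) \<bullet> (D *v gavg (iterate k \<omega>)) \<partial>M) = c * r k" for k
  proof -
    have "qnorm2 ((1 / c) *\<^sub>R D) v = (1 / c) * (v \<bullet> (D *v v))" for v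
      unfolding qnorm2_def by (simp add: scaleR_matrix_vector_assoc[symmetric] inner_commute)
    then show ?thesis using c by (simp add: r_def)
  qed
  have \<delta>_nonneg: "\<delta> k \<ge> 0" for k
    using integral_ge_const[OF integral_favg_iterate(1)] lower by (simp add: \<delta>_def favg_def)
  have "\<delta> (Suc k) \<le> (1 + lambda_D / real n) * \<delta> k - (c / 2) * r k + lambda_D * \<Delta> / real n" for k
  proof -
    have "(\<Sum>i<n. (\<integral>\<omega>. fs i (iterate k \<omega>) \<partial>M) - finf_i i) = real n * (\<delta> k + \<Delta>)"
      using integral_favg_iterate(2)[of k] real_n_pos
      by (simp add: sum_subtractf \<delta>_def \<Delta>_def algebra_simps)
    then have "\<delta> (Suc k) \<le> \<delta> k - 1/2 * (c * r k) + lambda_D / real n ^ 2 * (real n * (\<delta> k + \<Delta>))"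
      using expected_descent[of k] unfolding r \<delta>_def by simp
    moreover have "lambda_D / real n ^ 2 * (real n * (\<delta> k + \<Delta>)) = lambda_D / real n * \<delta> k + lambda_D * \<Delta> / real n"
      using real_n_pos by (simp add: power2_eq_square field_simps)
    ultimately show ?thesis by (simp add: algebra_simps)
  qed
  from min_le_of_perturbed_descent[where \<delta> = \<delta> and r = r, OF _ c \<delta>_nonneg this K]
  have "Min (r ` {..<K}) \<le> 2 * (1 + lambda_D / real n) ^ K * \<delta> 0 / (c * real K)
      + 2 * (lambda_D * \<Delta> / real n) / c"
    using lambda_D_nonneg by simp
  moreover have "\<delta> 0 = favg x0 - finf" by (simp add: \<delta>_def prob_space)
  ultimately show ?thesis by (simp add: r_def \<Delta>_def mult.commute mult.left_commute)
qed

end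

theorem theorem4:
  fixes M :: "'a measure"
    and n :: nat
    and fs :: "nat \<Rightarrow> real^'d \<Rightarrow> real"
    and gf :: "nat \<Rightarrow> real^'d \<Rightarrow> real^'d"
    and finf_i :: "nat \<Rightarrow> real"
    and finf :: real
    and Ls :: "nat \<Rightarrow> real^'d^'d"
    and L D :: "real^'d^'d"
    and T :: "nat \<Rightarrow> nat \<Rightarrow> 'a \<Rightarrow> real^'d^'d"
    and Tdist :: "(real^'d^'d) measure"
    and x0 :: "real^'d"
    and K :: nat
  defines "f \<equiv> (\<lambda>x. (1 / real n) * (\<Sum>i<n. fs i x))"
    and "gradf \<equiv> (\<lambda>x. (1 / real n) *\<^sub>R (\<Sum>i<n. gf i x))"
    and "x \<equiv> iter n gf T D x0"
    and "c \<equiv> det D powr (1 / real CARD('d))"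
    and "Delta \<equiv> finf - (1 / real n) * (\<Sum>i<n. finf_i i)"
    and "lam \<equiv> Max ((\<lambda>i. lambda_max (integral\<^sup>L M (\<lambda>\<omega>.
               msqrt (Ls i) ** D ** (T i 0 \<omega> - mat 1) ** L ** (T i 0 \<omega> - mat 1) ** D ** msqrt (Ls i))))
             ` {..<n})"
  assumes n_pos: "n \<ge> 1"
    and grad_i: "\<And>i y. i < n \<Longrightarrow> (fs i has_derivative (\<lambda>h. gf i y \<bullet> h)) (at y)"
    and lower_i: "\<And>i y. i < n \<Longrightarrow> finf_i i \<le> fs i y"
    and smooth_i: "\<And>i. i < n \<Longrightarrow> pd (Ls i) \<and> matrix_smooth (Ls i) (fs i) (gf i)"
    and lower: "\<And>y. finf \<le> f y"
    and L_psd: "psd L"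
    and smooth: "matrix_smooth L f gradf"
    and P: "prob_space M"
    and T_meas: "\<And>i k. i < n \<Longrightarrow> T i k \<in> borel_measurable M"
    and T_indep: "prob_space.indep_vars M (\<lambda>_. borel) (\<lambda>(i, k). T i k) ({..<n} \<times> UNIV)"
    and T_dist: "\<And>i k. i < n \<Longrightarrow> distr M borel (T i k) = Tdist"
    and T_psd: "\<And>i k. i < n \<Longrightarrow> AE \<omega> in M. psd (T i k \<omega>)"
    and T_int: "\<And>i k. i < n \<Longrightarrow> integrable M (T i k)"
    and T_mean: "\<And>i k. i < n \<Longrightarrow> integral\<^sup>L M (T i k) = mat 1"
    and lam_int: "\<And>i k. i < n \<Longrightarrow> integrable M (\<lambda>\<omega>.
               msqrt (Ls i) ** D ** (T i k \<omega> - mat 1) ** L ** (T i k \<omega> - mat 1) ** D ** msqrt (Ls i))"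
    and f_int: "\<And>k. integrable M (\<lambda>\<omega>. f (x k \<omega>))"
    and fi_int: "\<And>i k. i < n \<Longrightarrow> integrable M (\<lambda>\<omega>. fs i (x k \<omega>))"
    and g_int: "\<And>k. integrable M (\<lambda>\<omega>. qnorm2 ((1 / c) *\<^sub>R D) (gradf (x k \<omega>)))"
    and D_pd: "pd D"
    and DLD: "loewner_le (D ** L ** D) D"
    and K_pos: "K \<ge> 1"
  shows "Min ((\<lambda>k. integral\<^sup>L M (\<lambda>\<omega>. qnorm2 ((1 / c) *\<^sub>R D) (gradf (x k \<omega>)))) ` {..<K})
         \<le> 2 * (1 + lam / real n) ^ K * (f x0 - finf) / (c * real K)
           + 2 * lam * Delta / (c * real n)"
proof -
  interpret distributed_det_cgd M n gf T D x0 fs finf_i finf Ls L Tdist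
  proof (intro distributed_det_cgd.intro sketched_iteration.intro sketched_iteration_axioms.intro
      distributed_det_cgd_axioms.intro P)
    show "gf i \<in> borel_measurable borel" if "i < n" for i
      using grad_i[OF that] by (rule borel_measurable_gradient)
  qed (use T_meas T_indep n_pos lower_i smooth_i lower L_psd smooth T_dist T_psd T_int T_mean lam_int
      fi_int D_pd DLD in \<open>simp_all add: f_def gradf_def x_def\<close>)
  have "c > 0" using det_pos_pd[OF D_pd] by (simp add: c_def)
  from min_expected_gradient_norm_le[OF this K_pos] show ?thesis
    unfolding f_def gradf_def x_def Delta_def lam_def favg_def[abs_def] gavg_def[abs_def] lambda_D_def
      noise_matrix_def .
qed

end
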